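(* Let $s\ge2$ and $\alpha>0$. For integers $2\le i\le j$, let $I_i=[i,i+\alpha\log i]$ and $I_j=[j,j+\alpha\log j]$. Then $$\sum_{\substack{\omega\sim\omega'\\ \omega\in\Omega_{I_i},\ \omega'\in\Omega_{I_j}}}P(E_\omega\cap E_{\omega'})\ll i^{-1/s}(\log i)^2(\log j),$$ with implied constant depending only on $s$ and $\alpha$.
   Context: Let $A\subseteq\{1,2,\dots\}$ be a random set in which the events $\{n\in A\}$ are mutually independent with $P(n\in A)=\frac1s n^{-1+1/s}$. For a finite set $\omega$ of distinct positive integers, $E_\omega$ is the event $\{\omega\subseteq A\}$. For $\omega=\{x_1,\dots,x_r\}$ define $\sigma(\omega)=\{a_1x_1+\cdots+a_rx_r: a_1+\cdots+a_r=s,\ a_i\ge1 \text{ integers}\}$. For an interval $I$, $\Omega_I=\{\omega:\sigma(\omega)\cap I\neq\emptyset\}$. We write $\omega\sim\omega'$ if $\omega\cap\omega'\neq\emptyset$ and $\omega\neq\omega'$. *)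

theory Defs
  imports "HOL-Probability.Probability"
begin

definition incl_prob :: "nat \<Rightarrow> nat \<Rightarrow> real" where
  "incl_prob s n = (1 / real s) * real n powr (-1 + 1 / real s)"

definition sigma_set :: "nat \<Rightarrow> nat set \<Rightarrow> nat set" where
  "sigma_set s \<omega> = {(\<Sum>x\<in>\<omega>. a x * x) | a. (\<forall>x\<in>\<omega>. 1 \<le> a x) \<and> (\<Sum>x\<in>\<omega>. a x) = s}"

definition Omega_I :: "nat \<Rightarrow> real \<Rightarrow> real \<Rightarrow> nat set set" where
  "Omega_I s lo hi = {\<omega>. finite \<omega> \<and> \<omega> \<subseteq> {1..} \<and>
      (\<exists>m\<in>sigma_set s \<omega>. lo \<le> real m \<and> real m \<le> hi)}"

definition related :: "nat set \<Rightarrow> nat set \<Rightarrow> bool" where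
  "related \<omega> \<omega>' \<longleftrightarrow> \<omega> \<inter> \<omega>' \<noteq> {} \<and> \<omega> \<noteq> \<omega>'"

definition event_E :: "'a measure \<Rightarrow> ('a \<Rightarrow> nat set) \<Rightarrow> nat set \<Rightarrow> 'a set" where
  "event_E M A \<omega> = {x \<in> space M. \<omega> \<subseteq> A x}"

end

theory Submission
  imports Defs
begin

text \<open>
  By independence, \<open>P(E_\<omega> \<inter> E_\<omega>')\<close> is the product of \<open>p(n) = n^(1/s - 1) / s\<close> over \<open>\<omega> \<union> \<omega>'\<close>.
  Two facts drive all estimates. Free elements below \<open>N\<close> cost a factor \<open>N^(1/s)\<close> each, since
  \<open>p(1) + ... + p(N) \<le> N^(1/s)\<close>. An element completing a set \<open>R\<close> to one whose \<open>\<sigma>\<close> meets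
  \<open>I = [lo, hi]\<close> ranges over at most \<open>s^(|R| + 1) (|I| + 1)\<close> integers, all at least \<open>lo / s\<close>, so it
  costs only \<open>O(|I| lo^(1/s - 1))\<close>.

  Let \<open>x\<close> be the largest element of \<open>\<omega> \<union> \<omega>'\<close> for a related pair. If \<open>x\<close> lies only in \<open>\<omega>'\<close>,
  the pair costs \<open>P(E_\<omega>)\<close> times the cost of \<open>\<omega>'\<close> given \<open>\<omega>\<close>: thanks to a common element, \<open>\<omega>'\<close> has at
  most \<open>s - 2\<close> free elements besides the completion \<open>x\<close>, so this factor is \<open>O(log j j^(-1/s))\<close>, and
  \<open>\<Sum>\<^sub>\<omega> P(E_\<omega>) = O(log i)\<close>. If \<open>x\<close> is shared, let \<open>w\<close> be the largest element of the symmetric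
  difference: \<open>x\<close> completes \<open>\<omega>\<close>, \<open>w\<close> completes \<open>\<omega>'\<close>, and the remaining at most \<open>2s - 3\<close>
  elements are summed after splitting them at the largest one \<open>u\<close> below \<open>w\<close>; summing
  \<open>p(u) u^(1/s - 1)\<close> against the free elements below \<open>u\<close> produces the extra factor \<open>log i\<close>.
\<close>

lemma sum_le_sum_inj:
  fixes g :: "'a \<Rightarrow> real" and h :: "'b \<Rightarrow> real"
  assumes "finite B" "inj_on \<phi> A" "\<phi> ` A \<subseteq> B" "\<And>a. a \<in> A \<Longrightarrow> g a \<le> h (\<phi> a)"
    "\<And>b. b \<in> B \<Longrightarrow> 0 \<le> h b"
  shows "sum g A \<le> sum h B"
proof -
  have "finite A" using assms(1-3) finite_imageD finite_subset by blast
  then have "sum g A \<le> sum (h \<circ> \<phi>) A" using assms(4) by (intro sum_mono) auto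
  also have "\<dots> = sum h (\<phi> ` A)" using assms(2) by (simp add: sum.reindex)
  also have "\<dots> \<le> sum h B" using assms by (intro sum_mono2) auto
  finally show ?thesis .
qed

lemma sum_Sigma_le:
  fixes g :: "'a \<times> 'b \<Rightarrow> real"
  assumes "finite A" "\<And>a. a \<in> A \<Longrightarrow> finite (B a)" "\<And>a. a \<in> A \<Longrightarrow> (\<Sum>b\<in>B a. g (a, b)) \<le> h a"
  shows "sum g (Sigma A B) \<le> sum h A"
proof -
  have "sum g (Sigma A B) = (\<Sum>a\<in>A. \<Sum>b\<in>B a. g (a, b))"
    using assms(1,2) by (subst sum.Sigma) auto
  also have "\<dots> \<le> sum h A" using assms(3) by (intro sum_mono) auto
  finally show ?thesis .
qed

lemma sum_Un_le:
  fixes f :: "'a \<Rightarrow> real"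
  assumes "finite A" "finite B" "\<And>x. 0 \<le> f x"
  shows "sum f (A \<union> B) \<le> sum f A + sum f B"
  using sum_Un[OF assms(1,2), of f] sum_nonneg[of "A \<inter> B" f] assms(3) by simp

lemma inj_on_remove_Max:
  assumes "\<And>B. B \<in> \<B> \<Longrightarrow> finite B" "\<And>B. B \<in> \<B> \<Longrightarrow> B \<noteq> {}"
  shows "inj_on (\<lambda>B. (B - {Max B}, Max B)) \<B>"
proof (rule inj_onI)
  fix B C assume "B \<in> \<B>" "C \<in> \<B>" and eq: "(B - {Max B}, Max B) = (C - {Max C}, Max C)"
  have "Max B \<in> B" "Max C \<in> C"
    using assms \<open>B \<in> \<B>\<close> \<open>C \<in> \<B>\<close> by (meson Max_in)+
  then show "B = C" using eq by (metis Pair_inject insert_Diff)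
qed

text \<open>Expanding the power of a sum, each set of size \<open>h\<close> appears (at least) once.\<close>
lemma sum_prod_subsets_card_eq_le:
  fixes q :: "'a::linorder \<Rightarrow> real"
  assumes "finite S" "\<And>x. 0 \<le> q x"
  shows "(\<Sum>A | A \<subseteq> S \<and> card A = h. prod q A) \<le> (sum q S) ^ h"
proof (induction h)
  case 0
  have "{A. A \<subseteq> S \<and> card A = 0} = {{}}"
    using assms(1) by (auto dest: finite_subset)
  then show ?case by simp
next
  case (Suc h)
  let ?F = "{A. A \<subseteq> S \<and> card A = h}"
  have "(\<Sum>A | A \<subseteq> S \<and> card A = Suc h. prod q A) \<le> (\<Sum>(A, v)\<in>?F \<times> S. prod q A * q v)"
  proof (rule sum_le_sum_inj[where \<phi> = "\<lambda>B. (B - {Max B}, Max B)"])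
    show "finite (?F \<times> S)" using assms(1) by (auto intro: finite_subset)
    have Max_in: "Max B \<in> B" "finite B" if "B \<subseteq> S" "card B = Suc h" for B
    proof -
      show "finite B" using that assms(1) by (auto intro: finite_subset)
      then show "Max B \<in> B" using that by (intro Max_in) auto
    qed
    show "inj_on (\<lambda>B. (B - {Max B}, Max B)) {A. A \<subseteq> S \<and> card A = Suc h}"
      using Max_in by (intro inj_on_remove_Max) auto
    show "(\<lambda>B. (B - {Max B}, Max B)) ` {A. A \<subseteq> S \<and> card A = Suc h} \<subseteq> ?F \<times> S"
      using Max_in by auto
    show "prod q B \<le> (case (B - {Max B}, Max B) of (A, v) \<Rightarrow> prod q A * q v)"
      if "B \<in> {A. A \<subseteq> S \<and> card A = Suc h}" for B
      using that Max_in[of B] prod.remove[of B "Max B" q] by (simp add: mult.commute)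
  qed (auto simp: assms(2) prod_nonneg)
  also have "\<dots> = (\<Sum>A\<in>?F. prod q A) * sum q S"
    by (simp add: sum.cartesian_product[symmetric] sum_product)
  also have "\<dots> \<le> (sum q S) ^ h * sum q S"
    using Suc.IH assms(2) by (intro mult_right_mono) (auto intro: sum_nonneg)
  finally show ?case by (simp add: mult.commute)
qed

lemma sum_prod_subsets_card_le_le:
  fixes q :: "'a::linorder \<Rightarrow> real"
  assumes "finite S" "\<And>x. 0 \<le> q x" "\<And>h. 0 \<le> c h"
  shows "(\<Sum>A | A \<subseteq> S \<and> card A \<le> H. prod q A * c (card A)) \<le> (\<Sum>h\<le>H. (sum q S) ^ h * c h)"
proof -
  have fin: "finite {A. A \<subseteq> S \<and> card A \<le> H}"
    using assms(1) by (auto intro: finite_subset[of _ "Pow S"])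
  have "(\<Sum>A | A \<subseteq> S \<and> card A \<le> H. prod q A * c (card A))
      = (\<Sum>h\<le>H. \<Sum>A | A \<in> {A. A \<subseteq> S \<and> card A \<le> H} \<and> card A = h. prod q A * c (card A))"
    by (rule sum.group[symmetric, OF fin]) auto
  also have "\<dots> = (\<Sum>h\<le>H. \<Sum>A | A \<subseteq> S \<and> card A = h. prod q A * c h)"
    by (intro sum.cong refl) (auto intro: sum.cong)
  also have "\<dots> = (\<Sum>h\<le>H. (\<Sum>A | A \<subseteq> S \<and> card A = h. prod q A) * c h)"
    by (simp add: sum_distrib_right)
  also have "\<dots> \<le> (\<Sum>h\<le>H. (sum q S) ^ h * c h)"
    using sum_prod_subsets_card_eq_le[OF assms(1,2)] assms(3) by (intro sum_mono mult_right_mono) auto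
  finally show ?thesis .
qed


lemma card_nat_real_interval_le:
  assumes "lo \<le> hi"
  shows "real (card {m::nat. lo \<le> real m \<and> real m \<le> hi}) \<le> hi - lo + 1"
proof (cases "{m::nat. lo \<le> real m \<and> real m \<le> hi} = {}")
  case True
  then show ?thesis using assms by (simp only: card.empty)
next
  case False
  then have hi0: "0 \<le> hi" by auto
  have "{m::nat. lo \<le> real m \<and> real m \<le> hi} \<subseteq> {nat \<lceil>lo\<rceil> .. nat \<lfloor>hi\<rfloor>}"
    by (auto simp: ceiling_le_iff le_floor_iff le_nat_iff nat_le_iff)
  then have "card {m::nat. lo \<le> real m \<and> real m \<le> hi} \<le> nat \<lfloor>hi\<rfloor> + 1 - nat \<lceil>lo\<rceil>"
    using card_mono[of "{nat \<lceil>lo\<rceil> .. nat \<lfloor>hi\<rfloor>}"] by fastforce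
  moreover have "real (nat \<lfloor>hi\<rfloor>) \<le> hi" using hi0 by simp
  moreover have "lo \<le> real (nat \<lceil>lo\<rceil>)" by linarith
  ultimately show ?thesis using assms by (cases "nat \<lceil>lo\<rceil> \<le> nat \<lfloor>hi\<rfloor> + 1") (auto simp: of_nat_diff)
qed

lemma card_affine_preimage_le:
  assumes "lo \<le> hi" "(a::nat) \<ge> 1"
  shows "real (card {v::nat. lo \<le> real (a * v + c) \<and> real (a * v + c) \<le> hi}) \<le> hi - lo + 1"
proof -
  have "card {v::nat. lo \<le> real (a * v + c) \<and> real (a * v + c) \<le> hi}
      \<le> card {m::nat. lo \<le> real m \<and> real m \<le> hi}"
  proof (rule card_inj_on_le)
    show "inj_on (\<lambda>v. a * v + c) {v. lo \<le> real (a * v + c) \<and> real (a * v + c) \<le> hi}"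
      using assms(2) by (intro inj_onI) auto
    show "finite {m::nat. lo \<le> real m \<and> real m \<le> hi}"
      by (rule finite_subset[of _ "{..nat \<lfloor>hi\<rfloor>}"]) (auto simp: le_nat_floor)
  qed auto
  then show ?thesis using card_nat_real_interval_le[OF assms(1)] by linarith
qed

lemma sum_inverse_le_1_plus_ln:
  assumes "N \<ge> 1"
  shows "(\<Sum>n=1..N. 1 / real n) \<le> 1 + ln (real N)"
  using assms
proof (induction N rule: dec_induct)
  case (step N)
  have "ln (real N / real (Suc N)) \<le> real N / real (Suc N) - 1"
    using step by (intro ln_le_minus_one) auto
  then have "1 / real (Suc N) \<le> ln (real (Suc N)) - ln (real N)"
    using step by (simp add: ln_div field_simps)
  then show ?case using step by simp
qed simp

lemma powr_diff_ge:
  assumes "0 < b" "b \<le> 1" "n \<ge> (1::nat)"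
  shows "b * real n powr (b - 1) \<le> real n powr b - real (n - 1) powr b"
proof (cases "n = 1")
  case False
  then have n2: "n \<ge> 2" using assms by auto
  have "\<exists>z. real (n - 1) < z \<and> z < real n \<and>
      real n powr b - real (n - 1) powr b = (real n - real (n - 1)) * (b * z powr (b - 1))"
  proof (rule MVT2)
    fix x assume "real (n - 1) \<le> x" "x \<le> real n"
    then have "0 < x" using n2 by (simp add: of_nat_diff)
    then show "((\<lambda>a. a powr b) has_real_derivative b * x powr (b - 1)) (at x)"
      by (rule has_real_derivative_powr)
  qed (use n2 in auto)
  then obtain z where z: "real (n - 1) < z" "z < real n"
     "real n powr b - real (n - 1) powr b = b * z powr (b - 1)"
    using n2 by (auto simp: of_nat_diff)
  have "real n powr (b - 1) \<le> z powr (b - 1)"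
    using z n2 assms by (intro powr_mono2') auto
  then show ?thesis using z(3) assms by simp
qed (use assms in simp)

lemma sum_powr_le:
  assumes "0 < b" "b \<le> 1"
  shows "(\<Sum>n=1..N. real n powr (b - 1)) \<le> real N powr b / b"
proof (induction N)
  case (Suc N)
  have "(\<Sum>n=1..Suc N. real n powr (b - 1))
      \<le> real N powr b / b + (real (Suc N) powr b - real N powr b) / b"
    using Suc powr_diff_ge[OF assms, of "Suc N"] assms by (simp add: field_simps)
  also have "\<dots> = real (Suc N) powr b / b" by (simp add: diff_divide_distrib)
  finally show ?case .
qed simp

lemma sum_powr_le_ln:
  assumes "N \<ge> 1"
  shows "(\<Sum>u=1..N. real u powr e) \<le> real N powr (max 0 (e + 1)) * (1 + ln (real N))"
proof -
  have "real u powr e \<le> real N powr (max 0 (e + 1)) * (1 / real u)" if "u \<in> {1..N}" for u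
  proof -
    have u: "1 \<le> real u" "real u \<le> real N" using that by auto
    have "real u powr (e + 1) \<le> real N powr (max 0 (e + 1))"
    proof (cases "e + 1 \<le> 0")
      case True
      then have "real u powr (e + 1) \<le> 1 powr (e + 1)" using u by (intro powr_mono2') auto
      also have "\<dots> \<le> real N powr (max 0 (e + 1))" using u by (auto intro: ge_one_powr_ge_zero)
      finally show ?thesis .
    qed (use u in \<open>simp add: powr_mono2\<close>)
    moreover have "real u powr e = real u powr (e + 1) * (1 / real u)"
      using u by (simp add: powr_add)
    ultimately show ?thesis using u by (simp add: divide_right_mono)
  qed
  then have "(\<Sum>u=1..N. real u powr e) \<le> (\<Sum>u=1..N. real N powr (max 0 (e + 1)) * (1 / real u))"
    by (intro sum_mono)
  also have "\<dots> = real N powr (max 0 (e + 1)) * (\<Sum>u=1..N. 1 / real u)"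
    by (simp add: sum_distrib_left)
  also have "\<dots> \<le> real N powr (max 0 (e + 1)) * (1 + ln (real N))"
    using sum_inverse_le_1_plus_ln[OF assms] by (intro mult_left_mono) auto
  finally show ?thesis .
qed

locale basis_of_order =
  fixes s :: nat
  assumes two_le_s: "2 \<le> s"
begin

definition \<beta> :: real where "\<beta> = 1 / real s"

lemma \<beta>_pos: "0 < \<beta>" and \<beta>_le_half: "\<beta> \<le> 1 / 2" and s_mult_\<beta>: "real s * \<beta> = 1"
  using two_le_s by (auto simp: \<beta>_def field_simps)

lemma incl_prob_nonneg [simp]: "0 \<le> incl_prob s n"
  by (simp add: incl_prob_def)

lemma prod_incl_prob_nonneg [simp]: "0 \<le> prod (incl_prob s) A"
  by (simp add: prod_nonneg)

lemma incl_prob_le: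
  assumes "0 < t" "t \<le> real n"
  shows "incl_prob s n \<le> t powr (\<beta> - 1) / real s"
proof -
  have "real n powr (\<beta> - 1) \<le> t powr (\<beta> - 1)"
    using assms \<beta>_le_half by (intro powr_mono2') auto
  then show ?thesis by (simp add: incl_prob_def \<beta>_def divide_right_mono)
qed

lemma sum_incl_prob_le: "(\<Sum>n=1..N. incl_prob s n) \<le> real N powr \<beta>"
proof -
  have "(\<Sum>n=1..N. incl_prob s n) = (\<Sum>n=1..N. real n powr (\<beta> - 1)) / real s"
    by (simp add: incl_prob_def \<beta>_def sum_divide_distrib)
  also have "\<dots> \<le> (real N powr \<beta> / \<beta>) / real s"
    using \<beta>_pos \<beta>_le_half by (intro divide_right_mono sum_powr_le) auto
  also have "\<dots> = real N powr \<beta>" using two_le_s by (simp add: \<beta>_def)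
  finally show ?thesis .
qed

lemma sum_incl_prob_power_le:
  assumes "N \<ge> 1"
  shows "(\<Sum>n=1..N. incl_prob s n) ^ h \<le> real N powr (real h * \<beta>)"
proof -
  have "(\<Sum>n=1..N. incl_prob s n) ^ h \<le> (real N powr \<beta>) ^ h"
    by (intro power_mono sum_incl_prob_le sum_nonneg) auto
  also have "\<dots> = real N powr (real h * \<beta>)"
    using assms by (simp add: powr_realpow[symmetric] powr_powr mult.commute)
  finally show ?thesis .
qed

lemma sum_prod_incl_prob_le:
  assumes "N \<ge> 1"
  shows "(\<Sum>A | A \<subseteq> {1..N} \<and> card A \<le> H. prod (incl_prob s) A) \<le> real (H + 1) * real N powr (real H * \<beta>)"
proof -
  have "(\<Sum>A | A \<subseteq> {1..N} \<and> card A \<le> H. prod (incl_prob s) A)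
      \<le> (\<Sum>h\<le>H. (\<Sum>n=1..N. incl_prob s n) ^ h * 1)"
    using sum_prod_subsets_card_le_le[of "{1..N}" "incl_prob s" "\<lambda>_. 1" H] by simp
  also have "\<dots> \<le> (\<Sum>h\<le>H. real N powr (real H * \<beta>))"
  proof (intro sum_mono)
    fix h assume "h \<in> {..H}"
    then have "real N powr (real h * \<beta>) \<le> real N powr (real H * \<beta>)"
      using assms \<beta>_pos by (intro powr_mono) auto
    then show "(\<Sum>n=1..N. incl_prob s n) ^ h * 1 \<le> real N powr (real H * \<beta>)"
      using sum_incl_prob_power_le[OF assms, of h] by simp
  qed
  finally show ?thesis by simp
qed

section \<open>Completing a set to one whose \<open>\<sigma>\<close> meets an interval\<close>

definition completions :: "real \<Rightarrow> real \<Rightarrow> nat set \<Rightarrow> nat set" where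
  "completions lo hi R = {v. v \<notin> R \<and> (\<exists>m\<in>sigma_set s (insert v R). lo \<le> real m \<and> real m \<le> hi)}"

lemma completions_subset_UN:
  assumes "finite R"
  shows "completions lo hi R \<subseteq> (\<Union>(a, b)\<in>{1..s} \<times> (R \<rightarrow>\<^sub>E {1..s}).
           {v. lo \<le> real (a * v + (\<Sum>x\<in>R. b x * x)) \<and> real (a * v + (\<Sum>x\<in>R. b x * x)) \<le> hi})"
proof
  fix v assume "v \<in> completions lo hi R"
  then obtain m where v: "v \<notin> R" and m: "m \<in> sigma_set s (insert v R)" "lo \<le> real m" "real m \<le> hi"
    unfolding completions_def by auto
  then obtain a where a: "m = (\<Sum>x\<in>insert v R. a x * x)" "\<forall>x\<in>insert v R. 1 \<le> a x"
      "(\<Sum>x\<in>insert v R. a x) = s"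
    unfolding sigma_set_def by auto
  have a_le: "a x \<le> s" if "x \<in> insert v R" for x
    using member_le_sum[OF that, of a] a(3) assms by simp
  have "m = a v * v + (\<Sum>x\<in>R. restrict a R x * x)"
    using a(1) v assms by simp
  moreover have "(a v, restrict a R) \<in> {1..s} \<times> (R \<rightarrow>\<^sub>E {1..s})"
    using a(2) a_le by auto
  ultimately show "v \<in> (\<Union>(a, b)\<in>{1..s} \<times> (R \<rightarrow>\<^sub>E {1..s}).
           {v. lo \<le> real (a * v + (\<Sum>x\<in>R. b x * x)) \<and> real (a * v + (\<Sum>x\<in>R. b x * x)) \<le> hi})"
    using m(2,3) by (intro UN_I[of "(a v, restrict a R)"]) simp_all
qed

lemma
  assumes "finite R" "lo \<le> hi"
  shows finite_completions: "finite (completions lo hi R)"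
    and card_completions_le: "real (card (completions lo hi R)) \<le> real s ^ (card R + 1) * (hi - lo + 1)"
proof -
  let ?I = "{1..s} \<times> (R \<rightarrow>\<^sub>E {1..s})"
  let ?A = "\<lambda>(a, b). {v. lo \<le> real (a * v + (\<Sum>x\<in>R. b x * x)) \<and> real (a * v + (\<Sum>x\<in>R. b x * x)) \<le> hi}"
  have fin_I: "finite ?I" using assms by (auto intro!: finite_PiE)
  have fin_A: "finite (?A ab)" if ab: "ab \<in> ?I" for ab
  proof -
    have "?A ab \<subseteq> {..nat \<lfloor>hi\<rfloor>}"
    proof
      fix v assume "v \<in> ?A ab"
      then obtain a b where "a \<ge> 1" "real (a * v + (\<Sum>x\<in>R. b x * x)) \<le> hi"
        using ab by (cases ab) (auto simp del: of_nat_add of_nat_mult)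
      moreover have "v \<le> a * v + (\<Sum>x\<in>R. b x * x)"
        using \<open>a \<ge> 1\<close> by (metis le_add1 mult_1 mult_le_mono1 order_trans)
      ultimately have "real v \<le> hi"
        by (meson of_nat_le_iff order_trans)
      then show "v \<in> {..nat \<lfloor>hi\<rfloor>}"
        by (simp add: le_nat_floor)
    qed
    then show ?thesis using finite_subset by blast
  qed
  have sub: "completions lo hi R \<subseteq> (\<Union>ab\<in>?I. ?A ab)"
    using completions_subset_UN[OF assms(1)] by simp
  show "finite (completions lo hi R)"
    using fin_I fin_A by (intro finite_subset[OF sub]) auto
  have "card (completions lo hi R) \<le> card (\<Union>ab\<in>?I. ?A ab)"
    using fin_I fin_A by (intro card_mono[OF _ sub]) auto
  also have "\<dots> \<le> (\<Sum>ab\<in>?I. card (?A ab))"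
    by (rule card_UN_le[OF fin_I])
  finally have "card (completions lo hi R) \<le> (\<Sum>ab\<in>?I. card (?A ab))" .
  then have "real (card (completions lo hi R)) \<le> (\<Sum>ab\<in>?I. real (card (?A ab)))"
    unfolding of_nat_sum[symmetric] of_nat_le_iff .
  also have "\<dots> \<le> (\<Sum>ab\<in>?I. hi - lo + 1)"
  proof (intro sum_mono)
    fix ab assume "ab \<in> ?I"
    then show "real (card (?A ab)) \<le> hi - lo + 1"
      using card_affine_preimage_le[OF assms(2)] by (cases ab) (simp del: of_nat_add of_nat_mult)
  qed
  also have "\<dots> = real s ^ (card R + 1) * (hi - lo + 1)"
    using assms(1) by (simp add: card_cartesian_product card_PiE)
  finally show "real (card (completions lo hi R)) \<le> real s ^ (card R + 1) * (hi - lo + 1)" .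
qed

lemma sum_incl_prob_completions_le:
  assumes "finite R" "card R \<le> m" "lo \<le> hi" "0 < t"
  shows "(\<Sum>v\<in>completions lo hi R \<inter> {v. t \<le> real v}. incl_prob s v) \<le> real s ^ m * (hi - lo + 1) * t powr (\<beta> - 1)"
proof -
  let ?V = "completions lo hi R \<inter> {v. t \<le> real v}"
  have "finite ?V" "card ?V \<le> card (completions lo hi R)"
    using finite_completions[OF assms(1,3)] by (auto intro: card_mono)
  moreover have "real s ^ (card R + 1) * (hi - lo + 1) \<le> real s ^ (m + 1) * (hi - lo + 1)"
    using assms(2,3) two_le_s by (intro mult_right_mono power_increasing) auto
  ultimately have card_V: "real (card ?V) \<le> real s ^ (m + 1) * (hi - lo + 1)"
    using card_completions_le[OF assms(1,3)] by linarith
  have "(\<Sum>v\<in>?V. incl_prob s v) \<le> real (card ?V) * (t powr (\<beta> - 1) / real s)"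
    using assms(4) by (intro sum_bounded_above incl_prob_le) auto
  also have "\<dots> \<le> real s ^ (m + 1) * (hi - lo + 1) * (t powr (\<beta> - 1) / real s)"
    using card_V by (intro mult_right_mono) auto
  also have "\<dots> = real s ^ m * (hi - lo + 1) * t powr (\<beta> - 1)"
    using two_le_s by (simp add: field_simps)
  finally show ?thesis .
qed

lemma
  assumes "\<omega> \<in> Omega_I s lo hi"
  shows Omega_I_finite: "finite \<omega>"
    and Omega_I_subset: "\<omega> \<subseteq> {1..}"
    and Omega_I_card_le: "card \<omega> \<le> s"
    and Omega_I_nonempty: "\<omega> \<noteq> {}"
    and Omega_I_le_hi: "\<And>x. x \<in> \<omega> \<Longrightarrow> real x \<le> hi"
    and Omega_I_Max_ge: "lo / real s \<le> real (Max \<omega>)"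
proof -
  obtain m where m: "m \<in> sigma_set s \<omega>" "lo \<le> real m" "real m \<le> hi"
    and fin: "finite \<omega>" and sub: "\<omega> \<subseteq> {1..}"
    using assms unfolding Omega_I_def by auto
  obtain a where a: "m = (\<Sum>x\<in>\<omega>. a x * x)" "\<forall>x\<in>\<omega>. 1 \<le> a x" "(\<Sum>x\<in>\<omega>. a x) = s"
    using m(1) unfolding sigma_set_def by auto
  show "finite \<omega>" "\<omega> \<subseteq> {1..}" by fact+
  have "card \<omega> \<le> (\<Sum>x\<in>\<omega>. a x)" using a(2) sum_mono[of \<omega> "\<lambda>_. 1" a] by simp
  then show "card \<omega> \<le> s" using a(3) by simp
  show ne: "\<omega> \<noteq> {}" using a(3) two_le_s by auto
  show "real x \<le> hi" if "x \<in> \<omega>" for x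
  proof -
    have "x \<le> a x * x" using a(2) that by simp
    also have "\<dots> \<le> m" unfolding a(1) using member_le_sum[OF that _ fin, of "\<lambda>x. a x * x"] by simp
    finally show ?thesis using m(3) by linarith
  qed
  have "m \<le> (\<Sum>x\<in>\<omega>. a x * Max \<omega>)"
    unfolding a(1) using fin by (intro sum_mono mult_left_mono) auto
  also have "\<dots> = s * Max \<omega>" using a(3) by (simp add: sum_distrib_right[symmetric])
  finally show "lo / real s \<le> real (Max \<omega>)"
    using m(2) two_le_s by (simp add: field_simps) (metis of_nat_le_iff of_nat_mult order_trans)
qed

lemma Omega_I_subset_atLeastAtMost:
  assumes "\<omega> \<in> Omega_I s lo hi" "hi \<le> real N"
  shows "\<omega> \<subseteq> {1..N}"
  using Omega_I_subset[OF assms(1)] Omega_I_le_hi[OF assms(1)] assms(2) by force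

lemma finite_Omega_I:
  assumes "hi \<le> real N"
  shows "finite (Omega_I s lo hi)"
proof (rule finite_subset)
  show "Omega_I s lo hi \<subseteq> Pow {1..N}"
    using Omega_I_subset_atLeastAtMost[OF _ assms] by blast
qed simp

lemma Omega_I_mem_completions:
  assumes "\<omega> \<in> Omega_I s lo hi" "v \<in> \<omega>"
  shows "v \<in> completions lo hi (\<omega> - {v})"
  using assms insert_Diff[OF assms(2)] unfolding Omega_I_def completions_def by auto

text \<open>Remove the largest element: the rest is a free set below \<open>N\<close>, the largest one a completion.\<close>
lemma sum_prod_Omega_I_le:
  assumes "1 \<le> N" "hi \<le> real N" "lo \<le> hi" "0 < lo"
  shows "(\<Sum>\<omega>\<in>Omega_I s lo hi. prod (incl_prob s) \<omega>)
     \<le> real s * real N powr (real (s - 1) * \<beta>) * (real s ^ (s - 1) * (hi - lo + 1) * (lo / real s) powr (\<beta> - 1))"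
proof -
  let ?RR = "{R. R \<subseteq> {1..N} \<and> card R \<le> s - 1}"
  let ?V = "\<lambda>R. completions lo hi R \<inter> {v. lo / real s \<le> real v}"
  let ?K = "real s ^ (s - 1) * (hi - lo + 1) * (lo / real s) powr (\<beta> - 1)"
  have fin_RR: "finite ?RR" by (rule finite_subset[of _ "Pow {1..N}"]) auto
  have fin_V: "finite (?V R)" if "R \<in> ?RR" for R
    using that finite_completions[OF _ assms(3), of R] finite_subset[of R "{1..N}"] by auto
  have "(\<Sum>\<omega>\<in>Omega_I s lo hi. prod (incl_prob s) \<omega>)
      \<le> (\<Sum>(R, v)\<in>Sigma ?RR ?V. prod (incl_prob s) R * incl_prob s v)"
  proof (rule sum_le_sum_inj[where \<phi> = "\<lambda>\<omega>. (\<omega> - {Max \<omega>}, Max \<omega>)"])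
    show "finite (Sigma ?RR ?V)" by (rule finite_SigmaI[OF fin_RR fin_V])
    show "inj_on (\<lambda>\<omega>. (\<omega> - {Max \<omega>}, Max \<omega>)) (Omega_I s lo hi)"
      by (intro inj_on_remove_Max Omega_I_finite Omega_I_nonempty)
    show "(\<lambda>\<omega>. (\<omega> - {Max \<omega>}, Max \<omega>)) ` Omega_I s lo hi \<subseteq> Sigma ?RR ?V"
    proof (rule image_subsetI)
      fix \<omega> assume \<omega>: "\<omega> \<in> Omega_I s lo hi"
      have Max: "Max \<omega> \<in> \<omega>" using Omega_I_finite[OF \<omega>] Omega_I_nonempty[OF \<omega>] by simp
      have "card (\<omega> - {Max \<omega>}) \<le> s - 1"
        using Max Omega_I_finite[OF \<omega>] Omega_I_card_le[OF \<omega>] by simp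
      then show "(\<omega> - {Max \<omega>}, Max \<omega>) \<in> Sigma ?RR ?V"
        using Omega_I_subset_atLeastAtMost[OF \<omega> assms(2)] Omega_I_mem_completions[OF \<omega> Max]
          Omega_I_Max_ge[OF \<omega>] by blast
    qed
    show "prod (incl_prob s) \<omega> \<le> (case (\<omega> - {Max \<omega>}, Max \<omega>) of (R, v) \<Rightarrow> prod (incl_prob s) R * incl_prob s v)"
      if "\<omega> \<in> Omega_I s lo hi" for \<omega>
      using Omega_I_finite[OF that] Omega_I_nonempty[OF that]
      by (simp add: prod.remove[of \<omega> "Max \<omega>"] mult.commute)
  qed (auto split: prod.splits)
  also have "\<dots> = (\<Sum>R\<in>?RR. prod (incl_prob s) R * (\<Sum>v\<in>?V R. incl_prob s v))"
    using fin_RR fin_V by (subst sum.Sigma[symmetric]) (auto simp: sum_distrib_left)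
  also have "\<dots> \<le> (\<Sum>R\<in>?RR. prod (incl_prob s) R * ?K)"
  proof (intro sum_mono mult_left_mono)
    fix R assume "R \<in> ?RR"
    then show "(\<Sum>v\<in>?V R. incl_prob s v) \<le> ?K"
      using assms two_le_s finite_subset[of R "{1..N}"] by (intro sum_incl_prob_completions_le) auto
  qed simp
  also have "\<dots> = (\<Sum>R\<in>?RR. prod (incl_prob s) R) * ?K" by (simp add: sum_distrib_right)
  also have "\<dots> \<le> (real (s - 1 + 1) * real N powr (real (s - 1) * \<beta>)) * ?K"
    using assms by (intro mult_right_mono sum_prod_incl_prob_le) auto
  also have "\<dots> = real s * real N powr (real (s - 1) * \<beta>) * ?K" using two_le_s by simp
  finally show ?thesis .
qed

section \<open>Related pairs whose largest element lies in only one set\<close>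

definition related_pairs :: "real \<Rightarrow> real \<Rightarrow> real \<Rightarrow> real \<Rightarrow> (nat set \<times> nat set) set" where
  "related_pairs lo hi lo' hi' =
     {(\<omega>, \<omega>'). \<omega> \<in> Omega_I s lo hi \<and> \<omega>' \<in> Omega_I s lo' hi' \<and> related \<omega> \<omega>'}"

definition top_right_pairs :: "real \<Rightarrow> real \<Rightarrow> real \<Rightarrow> real \<Rightarrow> (nat set \<times> nat set) set" where
  "top_right_pairs lo hi lo' hi' = {(\<omega>, \<omega>') \<in> related_pairs lo hi lo' hi'. Max (\<omega> \<union> \<omega>') \<notin> \<omega>}"

lemma top_right_pairs_D:
  assumes "(\<omega>, \<omega>') \<in> top_right_pairs lo hi lo' hi'"
  defines "Y \<equiv> (\<omega>' - {Max \<omega>'}) - \<omega>"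
  shows "Max \<omega>' \<in> \<omega>'" "Max \<omega>' \<notin> \<omega>" "card Y \<le> s - 2"
    and "prod (incl_prob s) (\<omega> \<union> \<omega>') = prod (incl_prob s) \<omega> * prod (incl_prob s) Y * incl_prob s (Max \<omega>')"
proof -
  have \<omega>: "\<omega> \<in> Omega_I s lo hi" and \<omega>': "\<omega>' \<in> Omega_I s lo' hi'" and rel: "related \<omega> \<omega>'"
    and top: "Max (\<omega> \<union> \<omega>') \<notin> \<omega>"
    using assms by (auto simp: top_right_pairs_def related_pairs_def)
  note fin = Omega_I_finite[OF \<omega>] Omega_I_finite[OF \<omega>']
  have ne: "\<omega> \<noteq> {}" "\<omega>' \<noteq> {}" using Omega_I_nonempty \<omega> \<omega>' by auto
  have "Max (\<omega> \<union> \<omega>') \<in> \<omega>'" using top Max_in[of "\<omega> \<union> \<omega>'"] fin ne by auto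
  then have "Max (\<omega> \<union> \<omega>') \<le> Max \<omega>'" using fin by (intro Max_ge) auto
  moreover have "Max \<omega>' \<le> Max (\<omega> \<union> \<omega>')" using fin ne by (intro Max_mono) auto
  ultimately have Max_eq: "Max (\<omega> \<union> \<omega>') = Max \<omega>'" by simp
  show "Max \<omega>' \<in> \<omega>'" using fin ne by simp
  show "Max \<omega>' \<notin> \<omega>" using top Max_eq by simp
  have "(\<omega>' - {Max \<omega>'}) \<inter> \<omega> \<noteq> {}"
    using rel \<open>Max \<omega>' \<notin> \<omega>\<close> unfolding related_def by auto
  then have "card ((\<omega>' - {Max \<omega>'}) \<inter> \<omega>) \<ge> 1"
    using fin by (simp add: Suc_le_eq card_gt_0_iff)
  moreover have "card (\<omega>' - {Max \<omega>'}) = card ((\<omega>' - {Max \<omega>'}) \<inter> \<omega>) + card Y"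
    unfolding Y_def using fin by (intro card_Int_Diff) auto
  moreover have "card (\<omega>' - {Max \<omega>'}) = card \<omega>' - 1"
    using \<open>Max \<omega>' \<in> \<omega>'\<close> by simp
  ultimately show "card Y \<le> s - 2" using Omega_I_card_le[OF \<omega>'] by linarith
  have "\<omega> \<union> \<omega>' = \<omega> \<union> insert (Max \<omega>') Y" "\<omega> \<inter> insert (Max \<omega>') Y = {}" "Max \<omega>' \<notin> Y"
    unfolding Y_def using \<open>Max \<omega>' \<in> \<omega>'\<close> \<open>Max \<omega>' \<notin> \<omega>\<close> by auto
  moreover have "finite Y" unfolding Y_def using fin by simp
  ultimately show "prod (incl_prob s) (\<omega> \<union> \<omega>') = prod (incl_prob s) \<omega> * prod (incl_prob s) Y * incl_prob s (Max \<omega>')"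
    using fin by (simp add: prod.union_disjoint mult_ac)
qed

lemma sum_top_right_fibre_le:
  assumes \<omega>: "\<omega> \<in> Omega_I s lo hi" and "1 \<le> N'" "lo' \<le> hi'" "0 < lo'"
  shows "(\<Sum>((T, Y), v)\<in>Sigma (Pow \<omega> \<times> {Y. Y \<subseteq> {1..N'} \<and> card Y \<le> s - 2})
            (\<lambda>(T, Y). completions lo' hi' (T \<union> Y) \<inter> {v. lo' / real s \<le> real v}).
          prod (incl_prob s) \<omega> * prod (incl_prob s) Y * incl_prob s v)
    \<le> prod (incl_prob s) \<omega> * (2 ^ s * (real (s - 1) * real N' powr (real (s - 2) * \<beta>)) *
        (real s ^ (2 * s) * (hi' - lo' + 1) * (lo' / real s) powr (\<beta> - 1)))"
proof -
  let ?YY = "{Y. Y \<subseteq> {1..N'} \<and> card Y \<le> s - 2}"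
  let ?V = "\<lambda>(T, Y). completions lo' hi' (T \<union> Y) \<inter> {v. lo' / real s \<le> real v}"
  let ?K = "real s ^ (2 * s) * (hi' - lo' + 1) * (lo' / real s) powr (\<beta> - 1)"
  have fin_YY: "finite ?YY" by (rule finite_subset[of _ "Pow {1..N'}"]) auto
  have fin_TY: "finite (T \<union> Y)" if "(T, Y) \<in> Pow \<omega> \<times> ?YY" for T Y
    using that Omega_I_finite[OF \<omega>] finite_subset[of Y "{1..N'}"] finite_subset[of T \<omega>] by auto
  have fibre: "(\<Sum>v\<in>?V TY. prod (incl_prob s) \<omega> * prod (incl_prob s) (snd TY) * incl_prob s v)
      \<le> prod (incl_prob s) \<omega> * prod (incl_prob s) (snd TY) * ?K" if TY: "TY \<in> Pow \<omega> \<times> ?YY" for TY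
  proof -
    obtain T Y where TY_eq: "TY = (T, Y)" by force
    then have T: "T \<subseteq> \<omega>" and Y: "card Y \<le> s - 2" using TY by auto
    have "card (T \<union> Y) \<le> card T + card Y" by (rule card_Un_le)
    also have "\<dots> \<le> 2 * s"
      using card_mono[OF Omega_I_finite[OF \<omega>] T] Omega_I_card_le[OF \<omega>] Y by linarith
    finally have "(\<Sum>v\<in>?V TY. incl_prob s v) \<le> ?K"
      using sum_incl_prob_completions_le[OF fin_TY[OF TY[unfolded TY_eq]] _ assms(3)] TY_eq assms(4) two_le_s
      by simp
    then show ?thesis by (simp add: sum_distrib_left[symmetric] mult_left_mono)
  qed
  let ?h = "\<lambda>((T, Y), v). prod (incl_prob s) \<omega> * prod (incl_prob s) Y * incl_prob s v"
  have "(\<Sum>x\<in>Sigma (Pow \<omega> \<times> ?YY) ?V. ?h x)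
      \<le> (\<Sum>TY\<in>Pow \<omega> \<times> ?YY. prod (incl_prob s) \<omega> * prod (incl_prob s) (snd TY) * ?K)"
  proof (rule sum_Sigma_le)
    show "finite (Pow \<omega> \<times> ?YY)" using Omega_I_finite[OF \<omega>] fin_YY by simp
    fix TY assume TY: "TY \<in> Pow \<omega> \<times> ?YY"
    obtain T Y where TY_eq: "TY = (T, Y)" by force
    then have "finite (T \<union> Y)" using fin_TY TY by blast
    then have "finite (completions lo' hi' (T \<union> Y))" by (rule finite_completions[OF _ assms(3)])
    then show "finite (?V TY)" unfolding TY_eq by simp
    show "(\<Sum>v\<in>?V TY. ?h (TY, v)) \<le> prod (incl_prob s) \<omega> * prod (incl_prob s) (snd TY) * ?K"
      using fibre[OF TY] by (simp add: TY_eq)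
  qed
  also have "\<dots> = (\<Sum>T\<in>Pow \<omega>. \<Sum>Y\<in>?YY. prod (incl_prob s) \<omega> * prod (incl_prob s) Y * ?K)"
    unfolding sum.cartesian_product by (intro sum.cong) auto
  also have "\<dots> = real (card (Pow \<omega>)) * (prod (incl_prob s) \<omega> * (\<Sum>Y\<in>?YY. prod (incl_prob s) Y) * ?K)"
    by (simp add: sum_distrib_left sum_distrib_right)
  also have "\<dots> \<le> 2 ^ s * (prod (incl_prob s) \<omega> * (real (s - 2 + 1) * real N' powr (real (s - 2) * \<beta>)) * ?K)"
  proof (intro mult_mono)
    have "real (card (Pow \<omega>)) = 2 ^ card \<omega>" using Omega_I_finite[OF \<omega>] by (simp add: card_Pow)
    also have "\<dots> \<le> 2 ^ s" using Omega_I_card_le[OF \<omega>] by (intro power_increasing) auto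
    finally show "real (card (Pow \<omega>)) \<le> 2 ^ s" .
  qed (use assms sum_prod_incl_prob_le in \<open>auto intro!: sum_nonneg mult_nonneg_nonneg\<close>)
  finally show ?thesis
    using two_le_s by (simp add: mult_ac Suc_diff_Suc numeral_2_eq_2)
qed

text \<open>
  Record \<open>\<omega>\<close>, the largest element of \<open>\<omega>'\<close> and the rest of \<open>\<omega>'\<close> split into its part \<open>T\<close> inside \<open>\<omega>\<close>
  (at most \<open>2^s\<close> choices) and a free part of size at most \<open>s - 2\<close>.\<close>
lemma sum_top_right_pairs_le:
  assumes "1 \<le> N'" "hi' \<le> real N'" "lo' \<le> hi'" "0 < lo'" "hi \<le> real N"
  shows "(\<Sum>(\<omega>, \<omega>')\<in>top_right_pairs lo hi lo' hi'. prod (incl_prob s) (\<omega> \<union> \<omega>'))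
     \<le> (\<Sum>\<omega>\<in>Omega_I s lo hi. prod (incl_prob s) \<omega>) *
        (2 ^ s * (real (s - 1) * real N' powr (real (s - 2) * \<beta>)) *
         (real s ^ (2 * s) * (hi' - lo' + 1) * (lo' / real s) powr (\<beta> - 1)))"
proof -
  let ?\<Omega> = "Omega_I s lo hi"
  let ?YY = "{Y. Y \<subseteq> {1..N'} \<and> card Y \<le> s - 2}"
  let ?V = "\<lambda>(T, Y). completions lo' hi' (T \<union> Y) \<inter> {v. lo' / real s \<le> real v}"
  let ?B = "\<lambda>\<omega>. Sigma (Pow \<omega> \<times> ?YY) ?V"
  let ?K = "real s ^ (2 * s) * (hi' - lo' + 1) * (lo' / real s) powr (\<beta> - 1)"
  let ?g = "\<lambda>(\<omega>, ((T, Y), v)). prod (incl_prob s) \<omega> * prod (incl_prob s) Y * incl_prob s v"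
  let ?\<phi> = "\<lambda>(\<omega>, \<omega>'). (\<omega>, (((\<omega>' - {Max \<omega>'}) \<inter> \<omega>, (\<omega>' - {Max \<omega>'}) - \<omega>), Max \<omega>'))"
  have fin_YY: "finite ?YY" by (rule finite_subset[of _ "Pow {1..N'}"]) auto
  have fin_V: "finite (?V TY)" if "TY \<in> Pow \<omega> \<times> ?YY" "\<omega> \<in> ?\<Omega>" for TY \<omega>
  proof -
    obtain T Y where TY: "TY = (T, Y)" by force
    then have "finite (T \<union> Y)"
      using that Omega_I_finite[OF that(2)] finite_subset[of Y "{1..N'}"] finite_subset[of T \<omega>] by auto
    then show ?thesis using finite_completions[OF _ assms(3)] TY by auto
  qed
  have fin_B: "finite (?B \<omega>)" if "\<omega> \<in> ?\<Omega>" for \<omega>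
    using fin_YY Omega_I_finite[OF that] fin_V[OF _ that] by (intro finite_SigmaI) auto
  have "(\<Sum>(\<omega>, \<omega>')\<in>top_right_pairs lo hi lo' hi'. prod (incl_prob s) (\<omega> \<union> \<omega>')) \<le> sum ?g (Sigma ?\<Omega> ?B)"
  proof (rule sum_le_sum_inj[where \<phi> = ?\<phi>])
    show "finite (Sigma ?\<Omega> ?B)" by (rule finite_SigmaI[OF finite_Omega_I[OF assms(5)] fin_B])
    show "inj_on ?\<phi> (top_right_pairs lo hi lo' hi')"
    proof (rule inj_onI)
      fix p p' assume "p \<in> top_right_pairs lo hi lo' hi'" "p' \<in> top_right_pairs lo hi lo' hi'"
        and eq: "?\<phi> p = ?\<phi> p'"
      moreover obtain \<omega> \<omega>' \<eta> \<eta>' where p: "p = (\<omega>, \<omega>')" "p' = (\<eta>, \<eta>')" by force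
      ultimately have "Max \<omega>' \<in> \<omega>'" "Max \<eta>' \<in> \<eta>'" using top_right_pairs_D(1) by blast+
      moreover have "\<omega> = \<eta>" "\<omega>' - {Max \<omega>'} = \<eta>' - {Max \<eta>'}" "Max \<omega>' = Max \<eta>'"
        using eq unfolding p by (simp_all add: set_eq_iff) blast
      ultimately show "p = p'" unfolding p by (metis insert_Diff)
    qed
    show "?\<phi> ` top_right_pairs lo hi lo' hi' \<subseteq> Sigma ?\<Omega> ?B"
    proof (rule image_subsetI)
      fix p assume "p \<in> top_right_pairs lo hi lo' hi'"
      moreover obtain \<omega> \<omega>' where p_eq: "p = (\<omega>, \<omega>')" by force
      ultimately have p: "(\<omega>, \<omega>') \<in> top_right_pairs lo hi lo' hi'" by simp
      then have \<omega>: "\<omega> \<in> ?\<Omega>" and \<omega>': "\<omega>' \<in> Omega_I s lo' hi'"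
        by (auto simp: top_right_pairs_def related_pairs_def)
      let ?Q = "\<omega>' - {Max \<omega>'}"
      have "?Q - \<omega> \<in> ?YY"
        using top_right_pairs_D(3)[OF p] Omega_I_subset_atLeastAtMost[OF \<omega>' assms(2)] by auto
      moreover have "Max \<omega>' \<in> completions lo' hi' (?Q \<inter> \<omega> \<union> (?Q - \<omega>))"
        using Omega_I_mem_completions[OF \<omega>' top_right_pairs_D(1)[OF p]] by (simp add: Int_Diff_Un)
      ultimately show "?\<phi> p \<in> Sigma ?\<Omega> ?B"
        using \<omega> Omega_I_Max_ge[OF \<omega>'] p_eq by auto
    qed
    show "(case p of (\<omega>, \<omega>') \<Rightarrow> prod (incl_prob s) (\<omega> \<union> \<omega>')) \<le> ?g (?\<phi> p)"
      if "p \<in> top_right_pairs lo hi lo' hi'" for p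
      using that top_right_pairs_D(4) by (cases p) simp
  qed (auto split: prod.splits)
  also have "\<dots> \<le> (\<Sum>\<omega>\<in>?\<Omega>. prod (incl_prob s) \<omega> * (2 ^ s * (real (s - 1) * real N' powr (real (s - 2) * \<beta>)) * ?K))"
  proof (rule sum_Sigma_le[OF finite_Omega_I[OF assms(5)] fin_B])
    fix \<omega> assume "\<omega> \<in> ?\<Omega>"
    then show "(\<Sum>b\<in>?B \<omega>. ?g (\<omega>, b)) \<le> prod (incl_prob s) \<omega> * (2 ^ s * (real (s - 1) * real N' powr (real (s - 2) * \<beta>)) * ?K)"
      using sum_top_right_fibre_le[OF _ assms(1,3,4)] by simp
  qed
  finally show ?thesis by (simp add: sum_distrib_right)
qed

lemma prod_split_at:
  fixes q :: "'a::linorder \<Rightarrow> real"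
  assumes "finite W" "u \<in> W"
  shows "prod q W = q u * prod q {v\<in>W. u < v} * prod q {v\<in>W. v < u}"
    and "card W = card {v\<in>W. u < v} + card {v\<in>W. v < u} + 1"
proof -
  define A B where "A = {v\<in>W. u < v}" and "B = {v\<in>W. v < u}"
  have W: "W = insert u (A \<union> B)" "u \<notin> A \<union> B" "A \<inter> B = {}" "finite A" "finite B"
    using assms by (auto simp: A_def B_def)
  show "prod q W = q u * prod q A * prod q B" "card W = card A + card B + 1"
    using W by (simp_all add: prod.union_disjoint card_Un_disjoint mult.assoc)
qed

definition pred_in :: "nat set \<Rightarrow> nat \<Rightarrow> nat" where
  "pred_in W w = (if {v\<in>W. v < w} = {} then 0 else Max {v\<in>W. v < w})"

text \<open>The second component is \<open>pred_in W w\<close>, where \<open>w\<close> is the largest element of the symmetric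
  difference of a shared-top pair; \<open>u = 0\<close> encodes that no element of \<open>W\<close> lies below \<open>w\<close>.\<close>
definition tail_sets :: "nat \<Rightarrow> (nat set \<times> nat) set" where
  "tail_sets N = {(W, u). W \<subseteq> {1..N} \<and> card W \<le> 2 * s - 3 \<and>
     ((u = 0 \<and> card W \<le> s - 2) \<or> (u \<in> W \<and> card {v\<in>W. u < v} \<le> s - 2))}"

definition tail_weight :: "nat set \<times> nat \<Rightarrow> real" where
  "tail_weight = (\<lambda>(W, u). prod (incl_prob s) W * (if u = 0 then 1 else real u powr (\<beta> - 1)))"

lemma tail_weight_nonneg: "0 \<le> tail_weight x"
  by (auto simp: tail_weight_def split: prod.splits)

lemma finite_tail_sets: "finite (tail_sets N)"
  by (rule finite_subset[of _ "Pow {1..N} \<times> {0..N}"]) (auto simp: tail_sets_def)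

lemma mem_tail_sets_pred_in:
  assumes "W \<subseteq> {1..N}" "card W \<le> 2 * s - 3" "w \<notin> W" "card {v\<in>W. w < v} \<le> s - 2"
  shows "(W, pred_in W w) \<in> tail_sets N"
proof (cases "{v\<in>W. v < w} = {}")
  case True
  then have "W = {v\<in>W. w < v}" using assms(3) by (auto intro: le_neq_trans simp: not_less)
  then show ?thesis using assms True by (simp add: tail_sets_def pred_in_def)
next
  case False
  have fin: "finite {v\<in>W. v < w}" using assms(1) finite_subset by auto
  define u where "u = Max {v\<in>W. v < w}"
  have u: "u \<in> W" "u < w" using Max_in[OF fin False] by (auto simp: u_def)
  have below: "v \<le> u" if "v \<in> W" "v < w" for v using Max_ge[OF fin] that by (simp add: u_def)
  have "w < v" if "v \<in> W" "u < v" for v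
  proof (rule ccontr)
    assume "\<not> w < v"
    then have "v < w" using that(1) assms(3) by (cases "v = w") auto
    then show False using below[OF that(1)] that(2) by simp
  qed
  then have "{v\<in>W. u < v} = {v\<in>W. w < v}" using u by auto
  moreover have "pred_in W w = u" unfolding pred_in_def u_def using False by (rule if_not_P)
  ultimately show ?thesis using assms u by (simp add: tail_sets_def)
qed

lemma pred_in_le: "finite W \<Longrightarrow> pred_in W w \<le> w"
  using Max_in[of "{v\<in>W. v < w}"] by (auto simp: pred_in_def)

lemma sum_tail_weight_no_pred_le:
  assumes "N \<ge> 1"
  shows "(\<Sum>x\<in>{x\<in>tail_sets N. snd x = 0}. tail_weight x) \<le> real s * real N powr (1 - 2 * \<beta>) * (1 + ln (real N))"
proof -
  have "(\<Sum>x\<in>{x\<in>tail_sets N. snd x = 0}. tail_weight x)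
      \<le> (\<Sum>A | A \<subseteq> {1..N} \<and> card A \<le> s - 2. prod (incl_prob s) A)"
  proof (rule sum_le_sum_inj[where \<phi> = fst])
    show "finite {A. A \<subseteq> {1..N} \<and> card A \<le> s - 2}" by (rule finite_subset[of _ "Pow {1..N}"]) auto
    show "inj_on fst {x\<in>tail_sets N. snd x = 0}" by (intro inj_onI) (auto simp: prod_eq_iff)
  qed (auto simp: tail_sets_def tail_weight_def)
  also have "\<dots> \<le> real (s - 2 + 1) * real N powr (real (s - 2) * \<beta>)"
    by (rule sum_prod_incl_prob_le[OF assms])
  also have "real (s - 2) * \<beta> = 1 - 2 * \<beta>" using two_le_s s_mult_\<beta> by (simp add: of_nat_diff algebra_simps)
  also have "real (s - 2 + 1) * real N powr (1 - 2 * \<beta>) \<le> real s * real N powr (1 - 2 * \<beta>)"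
    using two_le_s by (intro mult_right_mono) auto
  also have "\<dots> \<le> real s * real N powr (1 - 2 * \<beta>) * (1 + ln (real N))"
    using assms mult_left_mono[of 1 "1 + ln (real N)" "real s * real N powr (1 - 2 * \<beta>)"] by simp
  finally show ?thesis .
qed

text \<open>Summing over the element \<open>u\<close> and the free elements below it, for \<open>h\<close> fixed elements above.\<close>
lemma sum_pred_weight_le:
  assumes "N \<ge> 1" "h \<le> s - 2"
  shows "(\<Sum>u=1..N. incl_prob s u * real u powr (\<beta> - 1) *
            (real (2 * s - 4 - h + 1) * real u powr (real (2 * s - 4 - h) * \<beta>)))
    \<le> 2 * real N powr (1 - real (h + 2) * \<beta>) * (1 + ln (real N))"
proof -
  define K where "K = 2 * s - 4 - h"
  have K: "real K = 2 * real s - 4 - real h" "real (K + 1) \<le> 2 * real s"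
    using assms two_le_s by (auto simp: K_def of_nat_diff)
  have "real K * \<beta> = 2 - 4 * \<beta> - real h * \<beta>" "real h * \<beta> \<le> 1 - 2 * \<beta>"
    using K(1) s_mult_\<beta> assms two_le_s \<beta>_pos mult_right_mono[of "real h" "real s - 2" \<beta>]
    by (auto simp: left_diff_distrib)
  then have e: "(real K + 2) * \<beta> - 2 + 1 = 1 - real (h + 2) * \<beta>" "0 \<le> 1 - real (h + 2) * \<beta>"
    by (auto simp: algebra_simps)
  have "incl_prob s u * real u powr (\<beta> - 1) * (real (K + 1) * real u powr (real K * \<beta>))
      \<le> real (K + 1) / real s * real u powr ((real K + 2) * \<beta> - 2)" if "u \<in> {1..N}" for u
  proof -
    have u: "0 < real u" using that by auto
    have "incl_prob s u * real u powr (\<beta> - 1) * (real (K + 1) * real u powr (real K * \<beta>))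
        \<le> real u powr (\<beta> - 1) / real s * real u powr (\<beta> - 1) * (real (K + 1) * real u powr (real K * \<beta>))"
      using u by (intro mult_right_mono incl_prob_le) auto
    also have "\<dots> = real (K + 1) / real s * real u powr ((real K + 2) * \<beta> - 2)"
      using u by (simp add: powr_add[symmetric] algebra_simps add_divide_distrib)
    finally show ?thesis .
  qed
  then have "(\<Sum>u=1..N. incl_prob s u * real u powr (\<beta> - 1) * (real (K + 1) * real u powr (real K * \<beta>)))
      \<le> (\<Sum>u=1..N. real (K + 1) / real s * real u powr ((real K + 2) * \<beta> - 2))"
    by (rule sum_mono)
  also have "\<dots> = real (K + 1) / real s * (\<Sum>u=1..N. real u powr ((real K + 2) * \<beta> - 2))"
    by (simp add: sum_distrib_left)
  also have "\<dots> \<le> real (K + 1) / real s * (real N powr (max 0 ((real K + 2) * \<beta> - 2 + 1)) * (1 + ln (real N)))"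
    by (intro mult_left_mono sum_powr_le_ln assms) auto
  also have "\<dots> = real (K + 1) / real s * (real N powr (1 - real (h + 2) * \<beta>) * (1 + ln (real N)))"
    unfolding e(1) using e(2) by simp
  also have "\<dots> \<le> 2 * (real N powr (1 - real (h + 2) * \<beta>) * (1 + ln (real N)))"
    using K(2) assms two_le_s by (intro mult_right_mono) (auto simp: field_simps)
  finally show ?thesis by (simp add: K_def mult.assoc)
qed

text \<open>Split \<open>W\<close> at \<open>u\<close>: at most \<open>s - 2\<close> elements above \<open>u\<close>, and the rest below \<open>u\<close>.\<close>
lemma sum_tail_weight_pred_le_split:
  "(\<Sum>x\<in>{x\<in>tail_sets N. snd x \<noteq> 0}. tail_weight x)
    \<le> (\<Sum>(u, A, B)\<in>Sigma {1..N} (\<lambda>u. Sigma {A. A \<subseteq> {1..N} \<and> card A \<le> s - 2}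
                                       (\<lambda>A. {B. B \<subseteq> {1..u} \<and> card B \<le> 2 * s - 4 - card A})).
         incl_prob s u * real u powr (\<beta> - 1) * prod (incl_prob s) A * prod (incl_prob s) B)"
proof -
  let ?AA = "{A. A \<subseteq> {1..N} \<and> card A \<le> s - 2}"
  let ?BB = "\<lambda>(u::nat) A. {B. B \<subseteq> {1..u} \<and> card B \<le> 2 * s - 4 - card A}"
  let ?T = "Sigma {1..N} (\<lambda>u. Sigma ?AA (?BB u))"
  let ?g = "\<lambda>(u, (A, B)). incl_prob s u * real u powr (\<beta> - 1) * prod (incl_prob s) A * prod (incl_prob s) B"
  let ?\<phi> = "\<lambda>(W, u). (u, ({v\<in>W. u < v}, {v\<in>W. v < u}))"
  have fin_AA: "finite ?AA" by (rule finite_subset[of _ "Pow {1..N}"]) auto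
  have fin_BB: "finite (?BB u A)" for u :: nat and A by (rule finite_subset[of _ "Pow {1..u}"]) auto
  show ?thesis
  proof (rule sum_le_sum_inj[where \<phi> = ?\<phi>])
    show "finite ?T" using fin_AA fin_BB by (intro finite_SigmaI) auto
    show "inj_on ?\<phi> {x\<in>tail_sets N. snd x \<noteq> 0}"
    proof (rule inj_onI)
      fix x x' assume "x \<in> {x\<in>tail_sets N. snd x \<noteq> 0}" "x' \<in> {x\<in>tail_sets N. snd x \<noteq> 0}"
        and eq: "?\<phi> x = ?\<phi> x'"
      moreover obtain W u W' u' where x: "x = (W, u)" "x' = (W', u')" by force
      ultimately have "u \<in> W" "u' \<in> W'" "u = u'"
        and parts: "{v\<in>W. u < v} = {v\<in>W'. u < v}" "{v\<in>W. v < u} = {v\<in>W'. v < u}"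
        by (auto simp: tail_sets_def)
      have "W = {v\<in>W. u < v} \<union> {u} \<union> {v\<in>W. v < u}" using \<open>u \<in> W\<close> by auto
      also have "\<dots> = {v\<in>W'. u < v} \<union> {u} \<union> {v\<in>W'. v < u}" unfolding parts ..
      also have "\<dots> = W'" using \<open>u' \<in> W'\<close> \<open>u = u'\<close> by auto
      finally show "x = x'" using x \<open>u = u'\<close> by simp
    qed
    show "?\<phi> ` {x\<in>tail_sets N. snd x \<noteq> 0} \<subseteq> ?T"
    proof (rule image_subsetI)
      fix x assume "x \<in> {x\<in>tail_sets N. snd x \<noteq> 0}"
      moreover obtain W u where x: "x = (W, u)" by force
      ultimately have W: "W \<subseteq> {1..N}" "card W \<le> 2 * s - 3" "u \<in> W" "card {v\<in>W. u < v} \<le> s - 2"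
        by (auto simp: tail_sets_def)
      then have "finite W" by (auto intro: finite_subset)
      then have "card {v\<in>W. v < u} \<le> 2 * s - 4 - card {v\<in>W. u < v}"
        using prod_split_at(2)[OF _ W(3)] W(2) two_le_s by linarith
      then show "?\<phi> x \<in> ?T" using W x by auto
    qed
    show "tail_weight x \<le> ?g (?\<phi> x)" if "x \<in> {x\<in>tail_sets N. snd x \<noteq> 0}" for x
    proof -
      obtain W u where x: "x = (W, u)" by force
      then have "u \<in> W" "u \<noteq> 0" "finite W" using that by (auto simp: tail_sets_def intro: finite_subset)
      then show ?thesis unfolding x tail_weight_def by (simp add: prod_split_at(1) mult_ac)
    qed
  qed (auto split: prod.splits)
qed

lemma sum_tail_weight_pred_le:
  assumes N: "N \<ge> 1"
  shows "(\<Sum>x\<in>{x\<in>tail_sets N. snd x \<noteq> 0}. tail_weight x) \<le> 2 * real s * real N powr (1 - 2 * \<beta>) * (1 + ln (real N))"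
proof -
  let ?AA = "{A. A \<subseteq> {1..N} \<and> card A \<le> s - 2}"
  let ?BB = "\<lambda>(u::nat) A. {B. B \<subseteq> {1..u} \<and> card B \<le> 2 * s - 4 - card A}"
  let ?T = "Sigma {1..N} (\<lambda>u. Sigma ?AA (?BB u))"
  let ?g = "\<lambda>(u, (A, B)). incl_prob s u * real u powr (\<beta> - 1) * prod (incl_prob s) A * prod (incl_prob s) B"
  let ?L = "1 + ln (real N)"
  let ?c = "\<lambda>h. 2 * real N powr (1 - real (h + 2) * \<beta>) * ?L"
  have fin_AA: "finite ?AA" by (rule finite_subset[of _ "Pow {1..N}"]) auto
  have fin_BB: "finite (?BB u A)" for u :: nat and A by (rule finite_subset[of _ "Pow {1..u}"]) auto
  have "(\<Sum>x\<in>{x\<in>tail_sets N. snd x \<noteq> 0}. tail_weight x) \<le> sum ?g ?T"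
    by (rule sum_tail_weight_pred_le_split)
  also have "\<dots> \<le> (\<Sum>u=1..N. \<Sum>A\<in>?AA. prod (incl_prob s) A * (incl_prob s u * real u powr (\<beta> - 1) *
        (real (2 * s - 4 - card A + 1) * real u powr (real (2 * s - 4 - card A) * \<beta>))))"
  proof (rule sum_Sigma_le, simp, intro finite_SigmaI fin_AA fin_BB)
    fix u assume u: "u \<in> {1..N}"
    show "(\<Sum>b\<in>Sigma ?AA (?BB u). ?g (u, b)) \<le> (\<Sum>A\<in>?AA. prod (incl_prob s) A * (incl_prob s u *
        real u powr (\<beta> - 1) * (real (2 * s - 4 - card A + 1) * real u powr (real (2 * s - 4 - card A) * \<beta>))))"
    proof (rule sum_Sigma_le[OF fin_AA fin_BB])
      fix A
      have "(\<Sum>B\<in>?BB u A. ?g (u, A, B))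
          = incl_prob s u * real u powr (\<beta> - 1) * prod (incl_prob s) A * (\<Sum>B\<in>?BB u A. prod (incl_prob s) B)"
        by (simp add: sum_distrib_left)
      also have "\<dots> \<le> incl_prob s u * real u powr (\<beta> - 1) * prod (incl_prob s) A *
          (real (2 * s - 4 - card A + 1) * real u powr (real (2 * s - 4 - card A) * \<beta>))"
        using u by (intro mult_left_mono sum_prod_incl_prob_le) auto
      finally show "(\<Sum>B\<in>?BB u A. ?g (u, A, B)) \<le> prod (incl_prob s) A * (incl_prob s u *
          real u powr (\<beta> - 1) * (real (2 * s - 4 - card A + 1) * real u powr (real (2 * s - 4 - card A) * \<beta>)))"
        by (simp add: mult_ac)
    qed
  qed
  also have "\<dots> = (\<Sum>A\<in>?AA. prod (incl_prob s) A * (\<Sum>u=1..N. incl_prob s u * real u powr (\<beta> - 1) *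
        (real (2 * s - 4 - card A + 1) * real u powr (real (2 * s - 4 - card A) * \<beta>))))"
    by (subst sum.swap) (simp add: sum_distrib_left)
  also have "\<dots> \<le> (\<Sum>A\<in>?AA. prod (incl_prob s) A * ?c (card A))"
    using sum_pred_weight_le[OF N] by (intro sum_mono mult_left_mono) (auto simp: mult.assoc)
  also have "\<dots> \<le> (\<Sum>h\<le>s - 2. (\<Sum>n=1..N. incl_prob s n) ^ h * ?c h)"
    using N by (intro sum_prod_subsets_card_le_le) auto
  also have "\<dots> \<le> (\<Sum>h\<le>s - 2. 2 * real N powr (1 - 2 * \<beta>) * ?L)"
  proof (intro sum_mono)
    fix h
    have "(\<Sum>n=1..N. incl_prob s n) ^ h * ?c h \<le> real N powr (real h * \<beta>) * ?c h"
      using N sum_incl_prob_power_le by (intro mult_right_mono) auto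
    also have "\<dots> = 2 * real N powr (1 - 2 * \<beta>) * ?L"
      using N by (simp add: powr_add[symmetric] algebra_simps)
    finally show "(\<Sum>n=1..N. incl_prob s n) ^ h * ?c h \<le> 2 * real N powr (1 - 2 * \<beta>) * ?L" .
  qed
  also have "\<dots> \<le> 2 * real s * real N powr (1 - 2 * \<beta>) * ?L"
    using two_le_s N by (simp add: mult_right_mono)
  finally show ?thesis .
qed

lemma sum_tail_weight_le:
  assumes "N \<ge> 1"
  shows "sum tail_weight (tail_sets N) \<le> 3 * real s * real N powr (1 - 2 * \<beta>) * (1 + ln (real N))"
proof -
  have "sum tail_weight (tail_sets N)
      = (\<Sum>x\<in>{x\<in>tail_sets N. snd x = 0}. tail_weight x) + (\<Sum>x\<in>{x\<in>tail_sets N. snd x \<noteq> 0}. tail_weight x)"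
    using finite_tail_sets by (subst sum.union_disjoint[symmetric]) (auto intro: sum.cong)
  then show ?thesis
    using sum_tail_weight_no_pred_le[OF assms] sum_tail_weight_pred_le[OF assms] by simp
qed

section \<open>Related pairs whose largest element is shared\<close>

definition top_shared_pairs :: "real \<Rightarrow> real \<Rightarrow> real \<Rightarrow> real \<Rightarrow> nat \<Rightarrow> (nat set \<times> nat set) set" where
  "top_shared_pairs lo hi lo' hi' N = {(\<omega>, \<omega>') \<in> related_pairs lo hi lo' hi'. \<omega> \<union> \<omega>' \<subseteq> {1..N} \<and>
      Max (\<omega> \<union> \<omega>') \<in> \<omega> \<inter> \<omega>' \<and> Max ((\<omega> - \<omega>') \<union> (\<omega>' - \<omega>)) \<in> \<omega>'}"

lemma top_shared_pairs_D:
  assumes "(\<omega>, \<omega>') \<in> top_shared_pairs lo hi lo' hi' N"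
  defines "x \<equiv> Max (\<omega> \<union> \<omega>')" and "w \<equiv> Max ((\<omega> - \<omega>') \<union> (\<omega>' - \<omega>))"
  defines "W \<equiv> (\<omega> \<union> \<omega>') - {x, w}"
  shows "x \<in> \<omega>" "x \<in> \<omega>'" "w \<in> \<omega>'" "\<omega> - {x} \<subseteq> W" "\<omega>' - {x, w} \<subseteq> W"
    and "(W, pred_in W w) \<in> tail_sets N" "real (max 1 (pred_in W w)) \<le> real w"
    and "x \<in> completions lo hi (\<omega> - {x})" "lo / real s \<le> real x"
    and "w \<in> completions lo' hi' (insert x (\<omega>' - {x, w}))"
    and "prod (incl_prob s) (\<omega> \<union> \<omega>') = incl_prob s x * incl_prob s w * prod (incl_prob s) W"
proof -
  have \<omega>: "\<omega> \<in> Omega_I s lo hi" and \<omega>': "\<omega>' \<in> Omega_I s lo' hi'" and rel: "related \<omega> \<omega>'"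
    and sub: "\<omega> \<union> \<omega>' \<subseteq> {1..N}" and x: "x \<in> \<omega>" "x \<in> \<omega>'" and w: "w \<in> \<omega>'"
    using assms(1) unfolding top_shared_pairs_def related_pairs_def x_def w_def by auto
  show "x \<in> \<omega>" "x \<in> \<omega>'" "w \<in> \<omega>'" by fact+
  note fin = Omega_I_finite[OF \<omega>] Omega_I_finite[OF \<omega>']
  have "(\<omega> - \<omega>') \<union> (\<omega>' - \<omega>) \<noteq> {}" using rel unfolding related_def by auto
  then have w_diff: "w \<in> (\<omega> - \<omega>') \<union> (\<omega>' - \<omega>)" using fin unfolding w_def by (intro Max_in) auto
  then have "w \<notin> \<omega>" using w by auto
  then have "x \<noteq> w" using x by auto
  have fin_W: "finite W" unfolding W_def using fin by simp
  have "Max \<omega> \<le> x" unfolding x_def using fin x by (intro Max_mono) auto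
  moreover have "x \<le> Max \<omega>" using fin x by simp
  ultimately show "lo / real s \<le> real x" using Omega_I_Max_ge[OF \<omega>] by simp
  show "x \<in> completions lo hi (\<omega> - {x})" by (rule Omega_I_mem_completions[OF \<omega> x(1)])
  have "\<omega>' - {w} = insert x (\<omega>' - {x, w})" using x(2) \<open>x \<noteq> w\<close> by auto
  then show "w \<in> completions lo' hi' (insert x (\<omega>' - {x, w}))"
    using Omega_I_mem_completions[OF \<omega>' w] by simp
  show "\<omega> - {x} \<subseteq> W" "\<omega>' - {x, w} \<subseteq> W" unfolding W_def using \<open>w \<notin> \<omega>\<close> by auto
  have above_w: "{v\<in>W. w < v} \<subseteq> \<omega>' - {x, w}"
  proof
    fix v assume v: "v \<in> {v\<in>W. w < v}"
    have "v \<notin> (\<omega> - \<omega>') \<union> (\<omega>' - \<omega>)"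
    proof
      assume "v \<in> (\<omega> - \<omega>') \<union> (\<omega>' - \<omega>)"
      then have "v \<le> w" unfolding w_def using fin by (intro Max_ge) auto
      then show False using v by simp
    qed
    then show "v \<in> \<omega>' - {x, w}" using v unfolding W_def by auto
  qed
  have card_\<omega>': "card (\<omega>' - {x, w}) + 2 = card \<omega>'"
    using x(2) w \<open>x \<noteq> w\<close> fin card_mono[of \<omega>' "{x, w}"] by (simp add: card_Diff_subset)
  have "card (\<omega> \<union> \<omega>') + 1 \<le> card \<omega> + card \<omega>'"
    using card_Un_Int[OF fin] x fin card_gt_0_iff[of "\<omega> \<inter> \<omega>'"] by auto
  moreover have "card W + 2 = card (\<omega> \<union> \<omega>')"
    unfolding W_def using x w \<open>x \<noteq> w\<close> fin card_mono[of "\<omega> \<union> \<omega>'" "{x, w}"]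
    by (simp add: card_Diff_subset)
  ultimately have "card W \<le> 2 * s - 3" using Omega_I_card_le[OF \<omega>] Omega_I_card_le[OF \<omega>'] by linarith
  moreover have "card {v\<in>W. w < v} \<le> s - 2"
    using card_mono[OF _ above_w] card_\<omega>' Omega_I_card_le[OF \<omega>'] fin by simp
  ultimately show "(W, pred_in W w) \<in> tail_sets N"
    using sub by (intro mem_tail_sets_pred_in) (auto simp: W_def)
  show "real (max 1 (pred_in W w)) \<le> real w"
    using pred_in_le[OF fin_W, of w] sub w by auto
  have "\<omega> \<union> \<omega>' = insert x (insert w W)" "x \<notin> insert w W" "w \<notin> W"
    unfolding W_def using x w \<open>x \<noteq> w\<close> by auto
  then show "prod (incl_prob s) (\<omega> \<union> \<omega>') = incl_prob s x * incl_prob s w * prod (incl_prob s) W"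
    using fin_W by simp
qed

lemma sum_completion_pairs_le:
  assumes "finite S1" "card S1 \<le> 2 * s" "finite S2" "card S2 \<le> 2 * s" "lo \<le> hi" "0 < lo" "lo' \<le> hi'"
  shows "(\<Sum>(x, w)\<in>Sigma (completions lo hi S1 \<inter> {x. lo / real s \<le> real x})
              (\<lambda>x. completions lo' hi' (insert x S2) \<inter> {w. real (max 1 u) \<le> real w}).
            incl_prob s x * incl_prob s w)
    \<le> (real s ^ (2 * s) * (hi - lo + 1) * (lo / real s) powr (\<beta> - 1)) *
       (real s ^ (2 * s + 1) * (hi' - lo' + 1)) * (if u = 0 then 1 else real u powr (\<beta> - 1))"
    (is "(\<Sum>(x, w)\<in>Sigma ?X ?Y. _) \<le> ?K1 * ?K2 * ?t")
proof -
  have fin_X: "finite ?X" using finite_completions[OF assms(1,5)] by simp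
  have fin_Y: "finite (?Y x)" for x using finite_completions[OF _ assms(7), of "insert x S2"] assms(3) by simp
  have "(\<Sum>w\<in>?Y x. incl_prob s w) \<le> ?K2 * ?t" for x
  proof -
    have "card (insert x S2) \<le> 2 * s + 1" using assms(3,4) by (simp add: card_insert_if)
    moreover have "real (max 1 u) powr (\<beta> - 1) = ?t" by (auto simp: max_def)
    ultimately show ?thesis
      using sum_incl_prob_completions_le[of "insert x S2" "2 * s + 1" lo' hi' "real (max 1 u)"] assms(3,7)
      by (simp add: mult.assoc)
  qed
  then have "(\<Sum>(x, w)\<in>Sigma ?X ?Y. incl_prob s x * incl_prob s w) \<le> (\<Sum>x\<in>?X. incl_prob s x * (?K2 * ?t))"
    using fin_X fin_Y by (intro sum_Sigma_le) (auto simp: sum_distrib_left[symmetric] mult_left_mono)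
  also have "\<dots> = (\<Sum>x\<in>?X. incl_prob s x) * (?K2 * ?t)" by (simp add: sum_distrib_right)
  also have "\<dots> \<le> ?K1 * (?K2 * ?t)"
    using sum_incl_prob_completions_le[OF assms(1,2,5), of "lo / real s"] assms(6,7) two_le_s
    by (intro mult_right_mono) auto
  finally show ?thesis by (simp add: mult.assoc)
qed

lemma top_shared_pairs_eqI:
  assumes "(\<omega>, \<omega>') \<in> top_shared_pairs lo hi lo' hi' N" "(\<eta>, \<eta>') \<in> top_shared_pairs lo hi lo' hi' N"
    and "((\<omega> - {Max (\<omega> \<union> \<omega>')}, \<omega>' - {Max (\<omega> \<union> \<omega>'), Max ((\<omega> - \<omega>') \<union> (\<omega>' - \<omega>))}),
           (Max (\<omega> \<union> \<omega>'), Max ((\<omega> - \<omega>') \<union> (\<omega>' - \<omega>))))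
       = ((\<eta> - {Max (\<eta> \<union> \<eta>')}, \<eta>' - {Max (\<eta> \<union> \<eta>'), Max ((\<eta> - \<eta>') \<union> (\<eta>' - \<eta>))}),
           (Max (\<eta> \<union> \<eta>'), Max ((\<eta> - \<eta>') \<union> (\<eta>' - \<eta>))))"
  shows "(\<omega>, \<omega>') = (\<eta>, \<eta>')"
proof -
  define x w where "x = Max (\<omega> \<union> \<omega>')" and "w = Max ((\<omega> - \<omega>') \<union> (\<omega>' - \<omega>))"
  note eq = assms(3)[unfolded prod.inject, folded x_def w_def]
  have eqs: "Max (\<eta> \<union> \<eta>') = x" "Max ((\<eta> - \<eta>') \<union> (\<eta>' - \<eta>)) = w"
    using eq[THEN conjunct2] by simp_all
  have rest: "\<omega> - {x} = \<eta> - {x}" "\<omega>' - {x, w} = \<eta>' - {x, w}"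
    using eq[THEN conjunct1] unfolding eqs by simp_all
  have mem: "x \<in> \<omega>" "x \<in> \<omega>'" "w \<in> \<omega>'" "x \<in> \<eta>" "x \<in> \<eta>'" "w \<in> \<eta>'"
    using top_shared_pairs_D(1-3)[OF assms(1)] top_shared_pairs_D(1-3)[OF assms(2)]
    unfolding eqs by (simp_all add: x_def w_def)
  have "\<omega> = insert x (\<omega> - {x})" using mem by auto
  also have "\<dots> = \<eta>" unfolding rest using mem by auto
  finally have "\<omega> = \<eta>" .
  have "\<omega>' = insert x (insert w (\<omega>' - {x, w}))" using mem by auto
  also have "\<dots> = \<eta>'" unfolding rest using mem by auto
  finally show ?thesis using \<open>\<omega> = \<eta>\<close> by simp
qed

lemma finite_completion_pairs:
  assumes "finite S1" "finite S2" "lo \<le> hi" "lo' \<le> hi'"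
  shows "finite (Sigma (completions lo hi S1 \<inter> A) (\<lambda>x. completions lo' hi' (insert x S2) \<inter> B x))"
  using finite_completions[OF assms(1,3)] finite_completions[OF _ assms(4)] assms(2)
  by (intro finite_SigmaI) auto

lemma sum_top_shared_fibre_le:
  assumes W: "(W, u) \<in> tail_sets N" and "lo \<le> hi" "0 < lo" "lo' \<le> hi'"
  shows "(\<Sum>(S, (x, w))\<in>Sigma (Pow W \<times> Pow W) (\<lambda>(S1, S2). Sigma (completions lo hi S1 \<inter> {x. lo / real s \<le> real x})
              (\<lambda>x. completions lo' hi' (insert x S2) \<inter> {w. real (max 1 u) \<le> real w})).
            incl_prob s x * incl_prob s w * prod (incl_prob s) W)
    \<le> 4 ^ (2 * s) * ((real s ^ (2 * s) * (hi - lo + 1) * (lo / real s) powr (\<beta> - 1)) *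
        (real s ^ (2 * s + 1) * (hi' - lo' + 1))) * tail_weight (W, u)"
proof -
  let ?X = "\<lambda>S1. completions lo hi S1 \<inter> {x. lo / real s \<le> real x}"
  let ?Y = "\<lambda>u S2 x. completions lo' hi' (insert x S2) \<inter> {w. real (max 1 u) \<le> real w}"
  let ?K = "(real s ^ (2 * s) * (hi - lo + 1) * (lo / real s) powr (\<beta> - 1)) * (real s ^ (2 * s + 1) * (hi' - lo' + 1))"
  let ?h = "\<lambda>(S, (x, w)). incl_prob s x * incl_prob s w * prod (incl_prob s) W"
  have fin_W: "finite W" "card W \<le> 2 * s" using W by (auto simp: tail_sets_def intro: finite_subset)
  have "(\<Sum>b\<in>Sigma (Pow W \<times> Pow W) (\<lambda>(S1, S2). Sigma (?X S1) (?Y u S2)). ?h b)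
      \<le> (\<Sum>S\<in>Pow W \<times> Pow W. ?K * tail_weight (W, u))"
  proof (rule sum_Sigma_le)
    show "finite (Pow W \<times> Pow W)" using fin_W by simp
    fix S assume S: "S \<in> Pow W \<times> Pow W"
    obtain S1 S2 where S_eq: "S = (S1, S2)" by force
    then have S12: "finite S1" "card S1 \<le> 2 * s" "finite S2" "card S2 \<le> 2 * s"
      using S fin_W by (auto intro: finite_subset dest: card_mono[OF fin_W(1)])
    show "finite ((\<lambda>(S1, S2). Sigma (?X S1) (?Y u S2)) S)"
      using finite_completion_pairs[OF S12(1,3) assms(2,4)] S_eq by simp
    have "(\<Sum>c\<in>Sigma (?X S1) (?Y u S2). ?h (S, c))
        = prod (incl_prob s) W * (\<Sum>(x, w)\<in>Sigma (?X S1) (?Y u S2). incl_prob s x * incl_prob s w)"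
      by (simp add: sum_distrib_left case_prod_beta mult_ac)
    also have "\<dots> \<le> prod (incl_prob s) W * (?K * (if u = 0 then 1 else real u powr (\<beta> - 1)))"
      using sum_completion_pairs_le[OF S12 assms(2-4)] by (intro mult_left_mono) auto
    finally show "(\<Sum>c\<in>(case S of (S1, S2) \<Rightarrow> Sigma (?X S1) (?Y u S2)). ?h (S, c)) \<le> ?K * tail_weight (W, u)"
      by (simp add: S_eq tail_weight_def mult_ac)
  qed
  also have "\<dots> = real (card (Pow W \<times> Pow W)) * (?K * tail_weight (W, u))" by simp
  also have "\<dots> \<le> 4 ^ (2 * s) * (?K * tail_weight (W, u))"
  proof (rule mult_right_mono)
    have "real (card (Pow W \<times> Pow W)) = 4 ^ card W"
      using fin_W by (simp add: card_cartesian_product card_Pow power_mult_distrib[symmetric])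
    also have "\<dots> \<le> 4 ^ (2 * s)" using fin_W by (intro power_increasing) auto
    finally show "real (card (Pow W \<times> Pow W)) \<le> 4 ^ (2 * s)" .
  qed (use assms tail_weight_nonneg in auto)
  finally show ?thesis by (simp add: mult_ac)
qed

text \<open>
  Record the rest \<open>W\<close> of the union with \<open>pred_in W w\<close>, the traces of \<open>\<omega>\<close> and \<open>\<omega>'\<close> on \<open>W\<close>
  (at most \<open>4^(2s)\<close> choices), and the two largest elements \<open>x > w\<close>, each a completion.\<close>
lemma sum_top_shared_pairs_le:
  assumes "lo \<le> hi" "0 < lo" "lo' \<le> hi'"
  shows "(\<Sum>(\<omega>, \<omega>')\<in>top_shared_pairs lo hi lo' hi' N. prod (incl_prob s) (\<omega> \<union> \<omega>'))
     \<le> 4 ^ (2 * s) * (real s ^ (2 * s) * (hi - lo + 1) * (lo / real s) powr (\<beta> - 1)) *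
         (real s ^ (2 * s + 1) * (hi' - lo' + 1)) * sum tail_weight (tail_sets N)"
proof -
  let ?X = "\<lambda>S1. completions lo hi S1 \<inter> {x. lo / real s \<le> real x}"
  let ?Y = "\<lambda>u S2 x. completions lo' hi' (insert x S2) \<inter> {w. real (max 1 u) \<le> real w}"
  let ?C = "\<lambda>(W, u). Sigma (Pow W \<times> Pow W) (\<lambda>(S1, S2). Sigma (?X S1) (?Y u S2))"
  let ?g = "\<lambda>((W, u), (S, (x, w))). incl_prob s x * incl_prob s w * prod (incl_prob s) W"
  let ?K = "(real s ^ (2 * s) * (hi - lo + 1) * (lo / real s) powr (\<beta> - 1)) * (real s ^ (2 * s + 1) * (hi' - lo' + 1))"
  have fin_W: "finite W" "card W \<le> 2 * s" if "(W, u) \<in> tail_sets N" for W u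
    using that by (auto simp: tail_sets_def intro: finite_subset)
  have fin_pairs: "finite ((\<lambda>(S1, S2). Sigma (?X S1) (?Y u S2)) S)" if "S \<in> Pow W \<times> Pow W" "finite W" for S W u
    using that finite_completion_pairs assms finite_subset[of "fst S" W] finite_subset[of "snd S" W] by (cases S) auto
  have fin_C: "finite (?C Wu)" if "Wu \<in> tail_sets N" for Wu
    using that fin_W fin_pairs by (cases Wu) (auto intro!: finite_SigmaI)
  have "(\<Sum>(\<omega>, \<omega>')\<in>top_shared_pairs lo hi lo' hi' N. prod (incl_prob s) (\<omega> \<union> \<omega>')) \<le> sum ?g (Sigma (tail_sets N) ?C)"
  proof (rule sum_le_sum_inj)
    let ?x = "\<lambda>(\<omega>, \<omega>'). Max (\<omega> \<union> \<omega>')"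
    let ?w = "\<lambda>(\<omega>, \<omega>'). Max ((\<omega> - \<omega>') \<union> (\<omega>' - \<omega>))"
    let ?W = "\<lambda>p. (fst p \<union> snd p) - {?x p, ?w p}"
    let ?\<phi> = "\<lambda>p. ((?W p, pred_in (?W p) (?w p)), ((fst p - {?x p}, snd p - {?x p, ?w p}), (?x p, ?w p)))"
    show "finite (Sigma (tail_sets N) ?C)" using finite_tail_sets fin_C by (intro finite_SigmaI)
    show "inj_on ?\<phi> (top_shared_pairs lo hi lo' hi' N)"
    proof (rule inj_onI)
      fix p p' assume "p \<in> top_shared_pairs lo hi lo' hi' N" "p' \<in> top_shared_pairs lo hi lo' hi' N"
        and eq: "?\<phi> p = ?\<phi> p'"
      moreover obtain \<omega> \<omega>' \<eta> \<eta>' where p: "p = (\<omega>, \<omega>')" "p' = (\<eta>, \<eta>')" by force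
      ultimately have D: "(\<omega>, \<omega>') \<in> top_shared_pairs lo hi lo' hi' N"
        and D': "(\<eta>, \<eta>') \<in> top_shared_pairs lo hi lo' hi' N" by simp_all
      have eq': "?\<phi> (\<omega>, \<omega>') = ?\<phi> (\<eta>, \<eta>')" using eq unfolding p .
      show "p = p'" unfolding p
        using arg_cong[OF eq', of snd] by (intro top_shared_pairs_eqI[OF D D']) (simp only: fst_conv snd_conv prod.case)
    qed
    show "?\<phi> ` top_shared_pairs lo hi lo' hi' N \<subseteq> Sigma (tail_sets N) ?C"
    proof (rule image_subsetI)
      fix p assume "p \<in> top_shared_pairs lo hi lo' hi' N"
      moreover obtain \<omega> \<omega>' where p: "p = (\<omega>, \<omega>')" by force
      ultimately have "(\<omega>, \<omega>') \<in> top_shared_pairs lo hi lo' hi' N" by simp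
      note D = top_shared_pairs_D[OF this]
      show "?\<phi> p \<in> Sigma (tail_sets N) ?C" using D(4-10) unfolding p by auto
    qed
    show "(case p of (\<omega>, \<omega>') \<Rightarrow> prod (incl_prob s) (\<omega> \<union> \<omega>')) \<le> ?g (?\<phi> p)"
      if "p \<in> top_shared_pairs lo hi lo' hi' N" for p
      using that top_shared_pairs_D(11) by (cases p) simp
  qed (auto split: prod.splits)
  also have "\<dots> \<le> (\<Sum>Wu\<in>tail_sets N. 4 ^ (2 * s) * ?K * tail_weight Wu)"
  proof (rule sum_Sigma_le[OF finite_tail_sets fin_C])
    fix Wu assume Wu: "Wu \<in> tail_sets N"
    obtain W u where Wu_eq: "Wu = (W, u)" by force
    show "(\<Sum>b\<in>?C Wu. ?g (Wu, b)) \<le> 4 ^ (2 * s) * ?K * tail_weight Wu"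
      using sum_top_shared_fibre_le[OF Wu[unfolded Wu_eq] assms] by (simp add: Wu_eq)
  qed
  also have "\<dots> = 4 ^ (2 * s) * ?K * sum tail_weight (tail_sets N)" by (simp add: sum_distrib_left)
  finally show ?thesis by (simp only: mult.assoc)
qed

lemma sum_swap_prod_Un:
  "(\<Sum>(a, b)\<in>prod.swap ` X. prod q (a \<union> b)) = (\<Sum>(a, b)\<in>X. prod q (a \<union> b))"
  by (subst sum.reindex) (auto simp: comp_def case_prod_beta Un_commute)

lemma related_pairs_subset:
  assumes "hi \<le> real N"
  shows "related_pairs lo hi lo' hi' \<subseteq> top_right_pairs lo hi lo' hi' \<union> prod.swap ` top_right_pairs lo' hi' lo hi
           \<union> top_shared_pairs lo hi lo' hi' N \<union> prod.swap ` top_shared_pairs lo' hi' lo hi N"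
proof (rule subsetI, rule ccontr)
  fix p assume "p \<in> related_pairs lo hi lo' hi'" and not_in: "p \<notin> top_right_pairs lo hi lo' hi'
     \<union> prod.swap ` top_right_pairs lo' hi' lo hi \<union> top_shared_pairs lo hi lo' hi' N
     \<union> prod.swap ` top_shared_pairs lo' hi' lo hi N"
  moreover obtain \<omega> \<omega>' where p_eq: "p = (\<omega>, \<omega>')" by force
  ultimately have p: "(\<omega>, \<omega>') \<in> related_pairs lo hi lo' hi'"
    and not_shared: "(\<omega>, \<omega>') \<notin> top_shared_pairs lo hi lo' hi' N"
    and "(\<omega>, \<omega>') \<notin> top_right_pairs lo hi lo' hi'" "(\<omega>', \<omega>) \<notin> top_right_pairs lo' hi' lo hi"
    and not_shared': "(\<omega>', \<omega>) \<notin> top_shared_pairs lo' hi' lo hi N"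
    by (auto simp: image_iff)
  then have \<omega>: "\<omega> \<in> Omega_I s lo hi" and \<omega>': "\<omega>' \<in> Omega_I s lo' hi'" and rel: "related \<omega> \<omega>'"
    and top: "Max (\<omega> \<union> \<omega>') \<in> \<omega> \<inter> \<omega>'"
    by (auto simp: related_pairs_def top_right_pairs_def related_def Un_commute)
  note fin = Omega_I_finite[OF \<omega>] Omega_I_finite[OF \<omega>']
  have "\<omega> \<union> \<omega>' \<subseteq> {1..N}"
  proof
    fix v assume v: "v \<in> \<omega> \<union> \<omega>'"
    then have "real v \<le> real (Max (\<omega> \<union> \<omega>'))" using fin by simp
    also have "\<dots> \<le> hi" using Omega_I_le_hi[OF \<omega>] top by simp
    finally show "v \<in> {1..N}" using v Omega_I_subset[OF \<omega>] Omega_I_subset[OF \<omega>'] assms by auto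
  qed
  moreover have "Max ((\<omega> - \<omega>') \<union> (\<omega>' - \<omega>)) \<in> (\<omega> - \<omega>') \<union> (\<omega>' - \<omega>)"
    using rel fin unfolding related_def by (intro Max_in) auto
  ultimately have "(\<omega>', \<omega>) \<in> top_shared_pairs lo' hi' lo hi N"
    using p top not_shared by (auto simp: top_shared_pairs_def related_pairs_def related_def Un_commute)
  then show False using not_shared' by simp
qed

lemma sum_related_pairs_le:
  assumes "hi \<le> real N" "hi' \<le> real N'"
  shows "(\<Sum>(\<omega>, \<omega>')\<in>related_pairs lo hi lo' hi'. prod (incl_prob s) (\<omega> \<union> \<omega>'))
    \<le> (\<Sum>(\<omega>, \<omega>')\<in>top_right_pairs lo hi lo' hi'. prod (incl_prob s) (\<omega> \<union> \<omega>'))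
     + (\<Sum>(\<omega>, \<omega>')\<in>top_right_pairs lo' hi' lo hi. prod (incl_prob s) (\<omega> \<union> \<omega>'))
     + (\<Sum>(\<omega>, \<omega>')\<in>top_shared_pairs lo hi lo' hi' N. prod (incl_prob s) (\<omega> \<union> \<omega>'))
     + (\<Sum>(\<omega>, \<omega>')\<in>top_shared_pairs lo' hi' lo hi N. prod (incl_prob s) (\<omega> \<union> \<omega>'))"
proof -
  let ?F = "\<lambda>(\<omega>, \<omega>'). prod (incl_prob s) (\<omega> \<union> \<omega>')"
  have fin_pairs: "finite (related_pairs lo hi lo' hi')" "finite (related_pairs lo' hi' lo hi)"
    using finite_Omega_I[OF assms(1)] finite_Omega_I[OF assms(2)]
    by (auto simp: related_pairs_def intro: finite_subset[of _ "Omega_I s lo hi \<times> Omega_I s lo' hi'"]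
        finite_subset[of _ "Omega_I s lo' hi' \<times> Omega_I s lo hi"])
  have fin: "finite (top_right_pairs lo hi lo' hi')" "finite (top_right_pairs lo' hi' lo hi)"
    "finite (top_shared_pairs lo hi lo' hi' N)" "finite (top_shared_pairs lo' hi' lo hi N)"
    by (rule finite_subset[OF _ fin_pairs(1)] finite_subset[OF _ fin_pairs(2)];
        auto simp: top_right_pairs_def top_shared_pairs_def)+
  have "sum ?F (related_pairs lo hi lo' hi')
      \<le> sum ?F (top_right_pairs lo hi lo' hi' \<union> prod.swap ` top_right_pairs lo' hi' lo hi
           \<union> top_shared_pairs lo hi lo' hi' N \<union> prod.swap ` top_shared_pairs lo' hi' lo hi N)"
    using fin related_pairs_subset[OF assms(1)] by (intro sum_mono2) (auto split: prod.splits)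
  also have "\<dots> \<le> sum ?F (top_right_pairs lo hi lo' hi') + sum ?F (prod.swap ` top_right_pairs lo' hi' lo hi)
      + sum ?F (top_shared_pairs lo hi lo' hi' N) + sum ?F (prod.swap ` top_shared_pairs lo' hi' lo hi N)"
    using fin by (intro order_trans[OF sum_Un_le] add_mono order_refl) (auto split: prod.splits)
  finally show ?thesis unfolding sum_swap_prod_Un by linarith
qed

definition interval_ceiling :: "real \<Rightarrow> nat \<Rightarrow> nat" where
  "interval_ceiling \<alpha> k = nat \<lceil>real k + \<alpha> * ln (real k)\<rceil>"

lemma
  assumes "\<alpha> > 0" "2 \<le> k"
  shows interval_end_le_ceiling: "real k + \<alpha> * ln (real k) \<le> real (interval_ceiling \<alpha> k)"
    and one_le_interval_ceiling: "1 \<le> interval_ceiling \<alpha> k"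
    and interval_ceiling_le: "real (interval_ceiling \<alpha> k) \<le> (2 + \<alpha>) * real k"
    and interval_length_le: "\<alpha> * ln (real k) + 1 \<le> (\<alpha> + 2) * ln (real k)"
    and ln_interval_ceiling_le: "1 + ln (real (interval_ceiling \<alpha> k)) \<le> (3 + 2 * ln (2 + \<alpha>)) * ln (real k)"
proof -
  let ?h = "real k + \<alpha> * ln (real k)"
  have "ln 2 \<le> ln (real k)" using assms by simp
  then have one: "1 \<le> 2 * ln (real k)" using ln2_ge_two_thirds by linarith
  have "0 \<le> \<alpha> * ln (real k)" using assms by simp
  then have "2 \<le> ?h" using assms by linarith
  then show "?h \<le> real (interval_ceiling \<alpha> k)" unfolding interval_ceiling_def by linarith
  then have N: "1 \<le> real (interval_ceiling \<alpha> k)" using \<open>2 \<le> ?h\<close> by linarith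
  then show "1 \<le> interval_ceiling \<alpha> k" by simp
  have "real (interval_ceiling \<alpha> k) \<le> ?h + 1"
    unfolding interval_ceiling_def using \<open>2 \<le> ?h\<close> of_int_ceiling_le_add_one[of ?h] by simp
  moreover have "\<alpha> * ln (real k) \<le> \<alpha> * real k"
    using assms ln_le_minus_one[of "real k"] by (intro mult_left_mono) auto
  moreover have "2 \<le> real k" using assms by simp
  ultimately show N_le: "real (interval_ceiling \<alpha> k) \<le> (2 + \<alpha>) * real k"
    unfolding distrib_right by linarith
  show "\<alpha> * ln (real k) + 1 \<le> (\<alpha> + 2) * ln (real k)" using one by (simp add: algebra_simps)
  have "ln (real (interval_ceiling \<alpha> k)) \<le> ln ((2 + \<alpha>) * real k)"
    using N N_le by (intro ln_mono) auto
  also have "\<dots> = ln (2 + \<alpha>) + ln (real k)" using assms by (simp add: ln_mult)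
  also have "ln (2 + \<alpha>) \<le> 2 * ln (2 + \<alpha>) * ln (real k)"
    using one assms mult_left_mono[OF one, of "ln (2 + \<alpha>)"] by (simp add: mult_ac)
  finally show "1 + ln (real (interval_ceiling \<alpha> k)) \<le> (3 + 2 * ln (2 + \<alpha>)) * ln (real k)"
    using one by (simp add: algebra_simps)
qed

lemma powr_interval_ceiling_le:
  assumes "\<alpha> > 0" "2 \<le> k" "0 \<le> a"
  shows "real (interval_ceiling \<alpha> k) powr a * (real k / real s) powr (\<beta> - 1)
    \<le> (2 + \<alpha>) powr a * real s powr (1 - \<beta>) * real k powr (a + \<beta> - 1)"
proof -
  have "real (interval_ceiling \<alpha> k) powr a \<le> ((2 + \<alpha>) * real k) powr a"
    using assms one_le_interval_ceiling[OF assms(1,2)] interval_ceiling_le[OF assms(1,2)]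
    by (intro powr_mono2) auto
  also have "\<dots> = (2 + \<alpha>) powr a * real k powr a" using assms by (simp add: powr_mult)
  moreover have "(real k / real s) powr (\<beta> - 1) = real k powr (\<beta> - 1) * real s powr (1 - \<beta>)"
    using assms two_le_s by (simp add: powr_divide powr_minus_divide divide_simps powr_diff)
  ultimately have "real (interval_ceiling \<alpha> k) powr a * (real k / real s) powr (\<beta> - 1)
      \<le> (2 + \<alpha>) powr a * real k powr a * (real k powr (\<beta> - 1) * real s powr (1 - \<beta>))"
    by (simp add: mult_right_mono)
  also have "\<dots> = (2 + \<alpha>) powr a * real s powr (1 - \<beta>) * real k powr (a + \<beta> - 1)"
    using assms by (simp add: powr_add[symmetric] add_diff_eq mult_ac)
  finally show ?thesis .
qed

definition omega_sum_const :: "real \<Rightarrow> real" where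
  "omega_sum_const \<alpha> = real s ^ s * (2 + \<alpha>) powr (real (s - 1) * \<beta>) * real s powr (1 - \<beta>)"

definition completion_const :: "real \<Rightarrow> real" where
  "completion_const \<alpha> = 2 ^ s * real s ^ (2 * s + 1) * (2 + \<alpha>) powr (real (s - 2) * \<beta>) * real s powr (1 - \<beta>)"

definition shared_const :: "real \<Rightarrow> real" where
  "shared_const \<alpha> = 3 * 4 ^ (2 * s) * real s ^ (4 * s + 2) * (2 + \<alpha>) powr (1 - 2 * \<beta>) * real s powr (1 - \<beta>)"

lemma interval_consts_pos:
  assumes "\<alpha> > 0"
  shows "0 < omega_sum_const \<alpha>" "0 < completion_const \<alpha>" "0 < shared_const \<alpha>"
  using assms two_le_s by (auto simp: omega_sum_const_def completion_const_def shared_const_def)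

lemma sum_prod_Omega_interval_le:
  assumes "\<alpha> > 0" "2 \<le> k"
  shows "(\<Sum>\<omega>\<in>Omega_I s (real k) (real k + \<alpha> * ln (real k)). prod (incl_prob s) \<omega>)
    \<le> omega_sum_const \<alpha> * (\<alpha> * ln (real k) + 1)"
proof -
  let ?N = "interval_ceiling \<alpha> k" and ?L = "\<alpha> * ln (real k) + 1"
  have L: "0 \<le> ?L" using assms by simp
  have "(\<Sum>\<omega>\<in>Omega_I s (real k) (real k + \<alpha> * ln (real k)). prod (incl_prob s) \<omega>)
      \<le> real s * real ?N powr (real (s - 1) * \<beta>) * (real s ^ (s - 1) * ?L * (real k / real s) powr (\<beta> - 1))"
    using sum_prod_Omega_I_le[of ?N "real k + \<alpha> * ln (real k)" "real k"] assms
      one_le_interval_ceiling interval_end_le_ceiling by (simp add: add.commute)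
  also have "\<dots> = real s ^ s * ?L * (real ?N powr (real (s - 1) * \<beta>) * (real k / real s) powr (\<beta> - 1))"
    using two_le_s by (simp add: power_eq_if mult_ac)
  also have "\<dots> \<le> real s ^ s * ?L * ((2 + \<alpha>) powr (real (s - 1) * \<beta>) * real s powr (1 - \<beta>) *
      real k powr (real (s - 1) * \<beta> + \<beta> - 1))"
    using L assms \<beta>_pos by (intro mult_left_mono powr_interval_ceiling_le) auto
  also have "real (s - 1) * \<beta> + \<beta> - 1 = 0" using s_mult_\<beta> two_le_s by (simp add: of_nat_diff algebra_simps)
  finally show ?thesis using assms by (simp add: omega_sum_const_def mult_ac)
qed

lemma sum_top_right_pairs_interval_le:
  assumes "\<alpha> > 0" "2 \<le> a" "2 \<le> b"
  shows "(\<Sum>(\<omega>, \<omega>')\<in>top_right_pairs (real a) (real a + \<alpha> * ln (real a)) (real b) (real b + \<alpha> * ln (real b)).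
            prod (incl_prob s) (\<omega> \<union> \<omega>'))
    \<le> omega_sum_const \<alpha> * completion_const \<alpha> * (\<alpha> * ln (real a) + 1) * (\<alpha> * ln (real b) + 1) * real b powr (- \<beta>)"
proof -
  let ?N = "interval_ceiling \<alpha> b" and ?La = "\<alpha> * ln (real a) + 1" and ?Lb = "\<alpha> * ln (real b) + 1"
  let ?X = "real s ^ (2 * s) * ?Lb * (real ?N powr (real (s - 2) * \<beta>) * (real b / real s) powr (\<beta> - 1))"
  have L: "0 \<le> ?La" "0 \<le> ?Lb" using assms by auto
  have "(\<Sum>(\<omega>, \<omega>')\<in>top_right_pairs (real a) (real a + \<alpha> * ln (real a)) (real b) (real b + \<alpha> * ln (real b)).
            prod (incl_prob s) (\<omega> \<union> \<omega>'))
      \<le> (\<Sum>\<omega>\<in>Omega_I s (real a) (real a + \<alpha> * ln (real a)). prod (incl_prob s) \<omega>) *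
        (2 ^ s * (real (s - 1) * real ?N powr (real (s - 2) * \<beta>)) *
         (real s ^ (2 * s) * ?Lb * (real b / real s) powr (\<beta> - 1)))"
    using sum_top_right_pairs_le[of ?N "real b + \<alpha> * ln (real b)" "real b" "real a + \<alpha> * ln (real a)"
        "interval_ceiling \<alpha> a" "real a"] assms one_le_interval_ceiling interval_end_le_ceiling
    by (simp add: add.commute)
  also have "\<dots> \<le> (omega_sum_const \<alpha> * ?La) * (2 ^ s * real s * ?X)"
  proof (rule mult_mono)
    have "2 ^ s * (real (s - 1) * real ?N powr (real (s - 2) * \<beta>)) * (real s ^ (2 * s) * ?Lb * (real b / real s) powr (\<beta> - 1))
      = 2 ^ s * real (s - 1) * ?X" by (simp only: mult_ac)
    also have "\<dots> \<le> 2 ^ s * real s * ?X" using L by (intro mult_right_mono mult_left_mono) auto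
    finally show "2 ^ s * (real (s - 1) * real ?N powr (real (s - 2) * \<beta>)) * (real s ^ (2 * s) * ?Lb * (real b / real s) powr (\<beta> - 1))
      \<le> 2 ^ s * real s * ?X" .
  qed (use assms L sum_prod_Omega_interval_le interval_consts_pos(1)[OF assms(1)] in auto)
  also have "\<dots> \<le> (omega_sum_const \<alpha> * ?La) * (2 ^ s * real s * (real s ^ (2 * s) * ?Lb *
      ((2 + \<alpha>) powr (real (s - 2) * \<beta>) * real s powr (1 - \<beta>) * real b powr (real (s - 2) * \<beta> + \<beta> - 1))))"
    using L assms \<beta>_pos by (intro mult_left_mono powr_interval_ceiling_le) (auto simp: omega_sum_const_def)
  also have "real (s - 2) * \<beta> + \<beta> - 1 = - \<beta>" using s_mult_\<beta> two_le_s by (simp add: of_nat_diff algebra_simps)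
  finally show ?thesis by (simp add: completion_const_def mult_ac)
qed

lemma sum_top_shared_pairs_interval_le:
  assumes "\<alpha> > 0" "2 \<le> k" "k \<le> a" "2 \<le> b"
  shows "(\<Sum>(\<omega>, \<omega>')\<in>top_shared_pairs (real a) (real a + \<alpha> * ln (real a)) (real b) (real b + \<alpha> * ln (real b))
              (interval_ceiling \<alpha> k). prod (incl_prob s) (\<omega> \<union> \<omega>'))
    \<le> shared_const \<alpha> * (\<alpha> * ln (real a) + 1) * (\<alpha> * ln (real b) + 1) * real k powr (- \<beta>)
       * (1 + ln (real (interval_ceiling \<alpha> k)))"
proof -
  let ?N = "interval_ceiling \<alpha> k" and ?La = "\<alpha> * ln (real a) + 1" and ?Lb = "\<alpha> * ln (real b) + 1"
  let ?lN = "1 + ln (real ?N)" and ?C = "4 ^ (2 * s) * real s ^ (2 * s) * real s ^ (2 * s + 1) * (3 * real s)"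
  have L: "0 \<le> ?La" "0 \<le> ?Lb" "0 \<le> ?lN" using assms one_le_interval_ceiling[OF assms(1,2)] by auto
  have "(\<Sum>(\<omega>, \<omega>')\<in>top_shared_pairs (real a) (real a + \<alpha> * ln (real a)) (real b) (real b + \<alpha> * ln (real b)) ?N.
          prod (incl_prob s) (\<omega> \<union> \<omega>'))
      \<le> 4 ^ (2 * s) * (real s ^ (2 * s) * ?La * (real a / real s) powr (\<beta> - 1)) *
         (real s ^ (2 * s + 1) * ?Lb) * sum tail_weight (tail_sets ?N)"
    using sum_top_shared_pairs_le[of "real a" "real a + \<alpha> * ln (real a)" "real b" "real b + \<alpha> * ln (real b)" ?N] assms
    by (simp add: add.commute)
  also have "\<dots> \<le> 4 ^ (2 * s) * (real s ^ (2 * s) * ?La * (real a / real s) powr (\<beta> - 1)) *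
         (real s ^ (2 * s + 1) * ?Lb) * (3 * real s * real ?N powr (1 - 2 * \<beta>) * ?lN)"
    using L sum_tail_weight_le[OF one_le_interval_ceiling[OF assms(1,2)]] by (intro mult_left_mono) auto
  also have "\<dots> = ?C * ?La * ?Lb * ?lN * ((real a / real s) powr (\<beta> - 1) * real ?N powr (1 - 2 * \<beta>))"
    by (simp add: mult_ac)
  also have "\<dots> \<le> ?C * ?La * ?Lb * ?lN * ((real k / real s) powr (\<beta> - 1) * real ?N powr (1 - 2 * \<beta>))"
    using L assms two_le_s \<beta>_le_half
    by (intro mult_left_mono mult_right_mono powr_mono2') (auto simp: divide_right_mono)
  also have "\<dots> \<le> ?C * ?La * ?Lb * ?lN * ((2 + \<alpha>) powr (1 - 2 * \<beta>) * real s powr (1 - \<beta>) * real k powr (- \<beta>))"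
    using L assms \<beta>_le_half powr_interval_ceiling_le[OF assms(1,2), of "1 - 2 * \<beta>"]
    by (intro mult_left_mono) (auto simp: mult.commute)
  also have "\<dots> = shared_const \<alpha> * ?La * ?Lb * real k powr (- \<beta>) * ?lN"
  proof -
    have "4 * s + 2 = Suc (2 * s + (2 * s + 1))" by simp
    then have "?C = 3 * 4 ^ (2 * s) * real s ^ (4 * s + 2)" by (simp only: power_Suc2 power_add mult_ac)
    then show ?thesis unfolding shared_const_def by (simp only: mult_ac)
  qed
  finally show ?thesis .
qed

definition related_pairs_const :: "real \<Rightarrow> real" where
  "related_pairs_const \<alpha> = (2 * omega_sum_const \<alpha> * completion_const \<alpha> + 2 * shared_const \<alpha>) *
     (\<alpha> + 2)\<^sup>2 * (3 + 2 * ln (2 + \<alpha>))"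

lemma related_pairs_const_pos: "\<alpha> > 0 \<Longrightarrow> 0 < related_pairs_const \<alpha>"
  using interval_consts_pos[of \<alpha>] by (simp add: related_pairs_const_def add_pos_pos)

lemma sum_related_pairs_interval_le:
  assumes "\<alpha> > 0" "2 \<le> i" "i \<le> j"
  shows "(\<Sum>(\<omega>, \<omega>')\<in>related_pairs (real i) (real i + \<alpha> * ln (real i)) (real j) (real j + \<alpha> * ln (real j)).
            prod (incl_prob s) (\<omega> \<union> \<omega>'))
    \<le> related_pairs_const \<alpha> * real i powr (- \<beta>) * (ln (real i))\<^sup>2 * ln (real j)"
proof -
  have j: "2 \<le> j" using assms by simp
  define Li Lj lN where "Li = \<alpha> * ln (real i) + 1" and "Lj = \<alpha> * ln (real j) + 1"
    and "lN = 1 + ln (real (interval_ceiling \<alpha> i))"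
  define c12 c3 where "c12 = omega_sum_const \<alpha> * completion_const \<alpha>" and "c3 = shared_const \<alpha>"
  have pos: "0 < c12" "0 < c3" "0 \<le> Li" "0 \<le> Lj" "1 \<le> lN"
    using interval_consts_pos[OF assms(1)] assms one_le_interval_ceiling[OF assms(1,2)]
    by (auto simp: c12_def c3_def Li_def Lj_def lN_def)
  define X where "X = Li * Lj * lN * real i powr (- \<beta>)"
  let ?S = "\<lambda>P. \<Sum>(\<omega>, \<omega>')\<in>P. prod (incl_prob s) (\<omega> \<union> \<omega>')"
  let ?I = "\<lambda>k. real k + \<alpha> * ln (real k)"
  have "real j powr (- \<beta>) \<le> real i powr (- \<beta>)" using assms \<beta>_pos by (intro powr_mono2') auto
  then have "c12 * Li * Lj * real j powr (- \<beta>) \<le> c12 * Li * Lj * real i powr (- \<beta>)"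
    using pos by (intro mult_left_mono) auto
  moreover have "c12 * Li * Lj * real i powr (- \<beta>) \<le> c12 * X"
    using pos mult_left_mono[of 1 lN "c12 * Li * Lj * real i powr (- \<beta>)"] by (simp add: X_def mult_ac)
  ultimately have "c12 * Li * Lj * real j powr (- \<beta>) \<le> c12 * X" "c12 * Li * Lj * real i powr (- \<beta>) \<le> c12 * X"
    by linarith+
  then have right: "?S (top_right_pairs (real i) (?I i) (real j) (?I j)) \<le> c12 * X"
      "?S (top_right_pairs (real j) (?I j) (real i) (?I i)) \<le> c12 * X"
    using sum_top_right_pairs_interval_le[OF assms(1,2) j] sum_top_right_pairs_interval_le[OF assms(1) j assms(2)]
    by (simp_all add: c12_def Li_def Lj_def mult_ac)
  have shared: "?S (top_shared_pairs (real i) (?I i) (real j) (?I j) (interval_ceiling \<alpha> i)) \<le> c3 * X"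
      "?S (top_shared_pairs (real j) (?I j) (real i) (?I i) (interval_ceiling \<alpha> i)) \<le> c3 * X"
    using sum_top_shared_pairs_interval_le[OF assms(1,2) order_refl j]
      sum_top_shared_pairs_interval_le[OF assms(1,2,3) assms(2)]
    by (simp_all add: c3_def Li_def Lj_def lN_def X_def mult_ac)
  have "?S (related_pairs (real i) (?I i) (real j) (?I j)) \<le> (2 * c12 + 2 * c3) * (Li * Lj * lN) * real i powr (- \<beta>)"
    using sum_related_pairs_le[OF interval_end_le_ceiling[OF assms(1,2)] interval_end_le_ceiling[OF assms(1) j],
        of "real i" "real j"] right shared
    by (simp add: X_def algebra_simps)
  also have "\<dots> \<le> (2 * c12 + 2 * c3) * (((\<alpha> + 2) * ln (real i)) * ((\<alpha> + 2) * ln (real j)) *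
      ((3 + 2 * ln (2 + \<alpha>)) * ln (real i))) * real i powr (- \<beta>)"
    using pos assms j interval_length_le ln_interval_ceiling_le[OF assms(1,2)]
    by (intro mult_right_mono mult_left_mono mult_mono) (auto simp: Li_def Lj_def lN_def)
  also have "\<dots> = related_pairs_const \<alpha> * real i powr (- \<beta>) * (ln (real i))\<^sup>2 * ln (real j)"
    by (simp add: related_pairs_const_def c12_def c3_def power2_eq_square mult_ac)
  finally show ?thesis .
qed

lemma sum_measure_related_pairs_eq:
  assumes "prob_space M" and "prob_space.indep_events M (\<lambda>n. {x \<in> space M. n \<in> A x}) {1..}"
    and "\<forall>n\<ge>1. measure M {x \<in> space M. n \<in> A x} = incl_prob s n"
  shows "(\<Sum>(\<omega>, \<omega>')\<in>related_pairs lo hi lo' hi'. measure M (event_E M A \<omega> \<inter> event_E M A \<omega>'))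
    = (\<Sum>(\<omega>, \<omega>')\<in>related_pairs lo hi lo' hi'. prod (incl_prob s) (\<omega> \<union> \<omega>'))"
proof (rule sum.cong[OF refl], clarify)
  interpret prob_space M by fact
  fix \<omega> \<omega>' assume "(\<omega>, \<omega>') \<in> related_pairs lo hi lo' hi'"
  then have \<omega>: "\<omega> \<in> Omega_I s lo hi" and \<omega>': "\<omega>' \<in> Omega_I s lo' hi'" by (auto simp: related_pairs_def)
  have ne: "\<omega> \<union> \<omega>' \<noteq> {}" using Omega_I_nonempty[OF \<omega>] by simp
  have "event_E M A \<omega> \<inter> event_E M A \<omega>' = (\<Inter>n\<in>\<omega> \<union> \<omega>'. {x \<in> space M. n \<in> A x})"
    using ne unfolding event_E_def by auto
  also have "measure M \<dots> = (\<Prod>n\<in>\<omega> \<union> \<omega>'. measure M {x \<in> space M. n \<in> A x})"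
    using assms(2) Omega_I_finite[OF \<omega>] Omega_I_finite[OF \<omega>'] Omega_I_subset[OF \<omega>] Omega_I_subset[OF \<omega>'] ne
    unfolding indep_events_def by auto
  also have "\<dots> = prod (incl_prob s) (\<omega> \<union> \<omega>')"
    using assms(3) Omega_I_subset[OF \<omega>] Omega_I_subset[OF \<omega>'] by (intro prod.cong) auto
  finally show "measure M (event_E M A \<omega> \<inter> event_E M A \<omega>') = prod (incl_prob s) (\<omega> \<union> \<omega>')" .
qed

end

theorem lemma4:
  fixes s :: nat and \<alpha> :: real
  assumes "s \<ge> 2" and "\<alpha> > 0"
  shows "\<exists>C>0. \<forall>(M :: 'a measure) (A :: 'a \<Rightarrow> nat set).
    prob_space M \<longrightarrow>
    (\<forall>x\<in>space M. A x \<subseteq> {1..}) \<longrightarrow>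
    prob_space.indep_events M (\<lambda>n. {x \<in> space M. n \<in> A x}) {1..} \<longrightarrow>
    (\<forall>n\<ge>1. measure M {x \<in> space M. n \<in> A x} = incl_prob s n) \<longrightarrow>
    (\<forall>i j :: nat. 2 \<le> i \<longrightarrow> i \<le> j \<longrightarrow>
       (\<Sum>(\<omega>, \<omega>') \<in> {(\<omega>, \<omega>'). \<omega> \<in> Omega_I s (real i) (real i + \<alpha> * ln (real i)) \<and>
                             \<omega>' \<in> Omega_I s (real j) (real j + \<alpha> * ln (real j)) \<and>
                             related \<omega> \<omega>'}.
          measure M (event_E M A \<omega> \<inter> event_E M A \<omega>'))
       \<le> C * real i powr (- 1 / real s) * (ln (real i))\<^sup>2 * ln (real j))"
proof -
  interpret basis_of_order s using assms(1) by unfold_locales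
  show ?thesis
  proof (intro exI[of _ "related_pairs_const \<alpha>"] conjI allI impI)
    fix M :: "'a measure" and A :: "'a \<Rightarrow> nat set" and i j :: nat
    assume M: "prob_space M" and indep: "prob_space.indep_events M (\<lambda>n. {x \<in> space M. n \<in> A x}) {1..}"
      and p: "\<forall>n\<ge>1. measure M {x \<in> space M. n \<in> A x} = incl_prob s n" and ij: "2 \<le> i" "i \<le> j"
    have "(\<Sum>(\<omega>, \<omega>')\<in>related_pairs (real i) (real i + \<alpha> * ln (real i)) (real j) (real j + \<alpha> * ln (real j)).
            measure M (event_E M A \<omega> \<inter> event_E M A \<omega>'))
        \<le> related_pairs_const \<alpha> * real i powr (- \<beta>) * (ln (real i))\<^sup>2 * ln (real j)"
      unfolding sum_measure_related_pairs_eq[OF M indep p] by (rule sum_related_pairs_interval_le[OF assms(2) ij])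
    then show "(\<Sum>(\<omega>, \<omega>') \<in> {(\<omega>, \<omega>'). \<omega> \<in> Omega_I s (real i) (real i + \<alpha> * ln (real i)) \<and>
                             \<omega>' \<in> Omega_I s (real j) (real j + \<alpha> * ln (real j)) \<and> related \<omega> \<omega>'}.
          measure M (event_E M A \<omega> \<inter> event_E M A \<omega>'))
       \<le> related_pairs_const \<alpha> * real i powr (- 1 / real s) * (ln (real i))\<^sup>2 * ln (real j)"
      unfolding related_pairs_def \<beta>_def by simp
  qed (rule related_pairs_const_pos[OF assms(2)])
qed
end
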